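(* Let $L\geq 2$, $k \geq 1$, $m\geq 1$, and $\mathcal{M} = (m_1,\dots,m_L)$ positive integers with $m_1 = d$ and $m_\ell \leq m$ for all $1 \leq \ell \leq L$. For any points $X_1,\dots,X_n \in \mathcal{B}_1(\mathbb{R}^d)$, $$\mathbb{E}_{\epsilon}[\|\mathbb{S}_n\|_{F_{L,\mathcal{M},k}(1)}] \leq 64 \sqrt{\frac{(L-1)k m (m+1)}{n}} \left(\sqrt{(L+1)\log(2) + \frac12 \log(L^2+1)} + \frac{\sqrt{\pi}}{2}\right).$$
   Context: A $k$-maxout network of depth $L$ and widths $\mathcal{M}$ is $f(x) = \frac{1}{\sqrt{m_L}}\sum_{i=1}^{m_L} a_i \max_{j \in [k]} \langle w^{(L-1)}_{i,j}, (x^{(L-1)},1)\rangle$, $a_i\in\mathbb{R}$, where $x^{(1)} = x$ and for $2 \leq \ell \leq L-1$, $1\le i\le m_\ell$: $x^{(\ell)}_i = \frac{1}{\sqrt{m_\ell}} \max_{j\in[k]} \langle w^{(\ell-1)}_{i,j}, (x^{(\ell-1)},1)\rangle$, $w^{(\ell-1)}_{i,j}\in\mathbb{R}^{m_{\ell-1}+1}$. $F_{L,\mathcal{M},k}(1)$ is the set of such networks with $\|w^{(\ell)}_{i,j}\|_2 \leq 1$ for all $\ell,i,j$ and $\|a\|_2 \leq 1$. $\mathcal{B}_1(\mathbb{R}^d)$ is the closed unit Euclidean ball. With $\epsilon_1,\dots,\epsilon_n$ i.i.d. Rademacher variables, $\|\mathbb{S}_n\|_{\mathcal{F}} = \sup_{f\in\mathcal{F}}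 |\frac1n\sum_{i=1}^n\epsilon_i f(X_i)|$, and $\mathbb{E}_\epsilon$ is expectation over the $\epsilon_i$ with the points fixed. *)

theory Defs
  imports "HOL-Analysis.Analysis"
begin

(* Conventions: vectors of varying dimension are functions nat => real; a vector of
   R^D is represented by its components at indices 0..D-1 (other values are ignored).  Weights: W l i j p = p-th component of w^{(l)}_{i,j}
   (l = 1..L-1, neuron i < M (l+1), piece j < k, component p <= M l, where
   the component p = M l multiplies the appended constant 1, i.e. the bias). *)

definition maxout_pre :: "(nat \<Rightarrow> nat) \<Rightarrow> nat \<Rightarrow> (nat \<Rightarrow> nat \<Rightarrow> nat \<Rightarrow> nat \<Rightarrow> real)
    \<Rightarrow> nat \<Rightarrow> (nat \<Rightarrow> real) \<Rightarrow> nat \<Rightarrow> real" where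
  "maxout_pre M k W l v i =
     Max ((\<lambda>j. (\<Sum>p<M l. W l i j p * v p) + W l i j (M l)) ` {..<k})"

fun maxout_hidden :: "(nat \<Rightarrow> nat) \<Rightarrow> nat \<Rightarrow> (nat \<Rightarrow> nat \<Rightarrow> nat \<Rightarrow> nat \<Rightarrow> real)
    \<Rightarrow> nat \<Rightarrow> (nat \<Rightarrow> real) \<Rightarrow> (nat \<Rightarrow> real)" where
  "maxout_hidden M k W 0 x = x"
| "maxout_hidden M k W (Suc 0) x = x"
| "maxout_hidden M k W (Suc (Suc l)) x =
     (\<lambda>i. (1 / sqrt (real (M (Suc (Suc l))))) *
            maxout_pre M k W (Suc l) (maxout_hidden M k W (Suc l) x) i)"

definition maxout_net :: "nat \<Rightarrow> (nat \<Rightarrow> nat) \<Rightarrow> nat \<Rightarrow> (nat \<Rightarrow> nat \<Rightarrow> nat \<Rightarrow> nat \<Rightarrow> real)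
    \<Rightarrow> (nat \<Rightarrow> real) \<Rightarrow> (nat \<Rightarrow> real) \<Rightarrow> real" where
  "maxout_net L M k W a x =
     (1 / sqrt (real (M L))) *
     (\<Sum>i<M L. a i * maxout_pre M k W (L - 1) (maxout_hidden M k W (L - 1) x) i)"

definition maxout_class :: "nat \<Rightarrow> (nat \<Rightarrow> nat) \<Rightarrow> nat \<Rightarrow> ((nat \<Rightarrow> real) \<Rightarrow> real) set" where
  "maxout_class L M k =
     {maxout_net L M k W a | W a.
        (\<forall>l \<in> {1..L-1}. \<forall>i < M (Suc l). \<forall>j < k. (\<Sum>p\<le>M l. (W l i j p)^2) \<le> 1) \<and>
        (\<Sum>i<M L. (a i)^2) \<le> 1}"

definition rademacher_emp :: "nat \<Rightarrow> (nat \<Rightarrow> 'x) \<Rightarrow> ('x \<Rightarrow> real) set \<Rightarrow> real" where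
  "rademacher_emp n X F =
     (\<Sum>\<epsilon> \<in> ({..<n} \<rightarrow>\<^sub>E {-1, 1::real}).
        (SUP f\<in>F. \<bar>(1 / real n) * (\<Sum>i<n. \<epsilon> i * f (X i))\<bar>)) / 2 ^ n"

end

theory Submission
  imports Defs "HOL-Probability.Hoeffding"
begin

text \<open>
  A maxout network with unit weight vectors is 1-Lipschitz in its input, and on the unit ball its
  output moves by at most \<open>\<eta> * L * sqrt L\<close> when every weight vector and the output weight vector
  move by at most \<open>\<eta>\<close> in the Euclidean norm. Truncating every parameter towards zero on a grid of
  mesh \<open>\<eta> / sqrt width\<close> is such a move, and since unit vectors have a bounded \<open>\<ell>\<^sub>1\<close>-budget on
  that grid, a volumetric count shows that at most \<open>(2 * e * (1 + 1 / \<eta>)) ^ E\<close> truncated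
  parameter vectors occur, \<open>E\<close> being the number of parameters. Chaining these finite
  approximations at the scales \<open>2 ^ - j\<close>, with Massart's finite class lemma (a consequence of
  Hoeffding's lemma) along every link, bounds the empirical Rademacher average by a Dudley-type
  sum, which is then estimated by elementary means.
\<close>

section \<open>Rademacher averages over sign vectors\<close>

lemma cosh_le_exp_half_square:
  fixes x :: real
  shows "cosh x \<le> exp (x\<^sup>2 / 2)"
proof -
  define a where "a = \<bar>x\<bar>"
  have "- (2 * a) * (1 / 2) + ln (1 + (1 / 2) * (exp (2 * a) - 1)) \<le> (2 * a)\<^sup>2 / 8"
    by (rule Hoeffdings_lemma_aux) (simp_all add: a_def)
  then have "ln ((1 + exp (2 * a)) / 2) \<le> x\<^sup>2 / 2 + a"
    by (simp add: a_def power2_eq_square algebra_simps add_divide_distrib)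
  then have "(1 + exp (2 * a)) / 2 \<le> exp (x\<^sup>2 / 2 + a)"
    by (metis exp_le_cancel_iff exp_ln add_pos_pos exp_gt_zero zero_less_one half_gt_zero)
  then have "(1 + exp (2 * a)) / 2 \<le> exp (x\<^sup>2 / 2) * exp a"
    by (simp add: exp_add)
  moreover have "(1 + exp (2 * a)) / 2 = cosh a * exp a"
    by (simp add: cosh_field_def field_simps exp_minus flip: exp_add)
  ultimately have "cosh a \<le> exp (x\<^sup>2 / 2)"
    by simp
  then show ?thesis
    by (simp add: a_def abs_real_def split: if_splits)
qed

definition sign_vectors :: "nat \<Rightarrow> (nat \<Rightarrow> real) set" where
  "sign_vectors n = {..<n} \<rightarrow>\<^sub>E {-1, 1}"

lemma finite_sign_vectors: "finite (sign_vectors n)"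
  by (simp add: sign_vectors_def finite_PiE)

lemma card_sign_vectors: "card (sign_vectors n) = 2 ^ n"
  by (simp add: sign_vectors_def card_PiE numeral_2_eq_2)

lemma sign_vectors_nonempty: "sign_vectors n \<noteq> {}"
  using card_sign_vectors[of n] by auto

lemma abs_le_one_of_mem_sign_vectors:
  assumes "e \<in> sign_vectors n" and "t < n"
  shows "\<bar>e t\<bar> \<le> 1"
  using PiE_mem[OF assms(1)[unfolded sign_vectors_def], of t] assms(2) by auto

lemma rademacher_emp_empty_sample: "F \<noteq> {} \<Longrightarrow> rademacher_emp 0 X F = 0"
  by (simp add: rademacher_emp_def)

lemma sum_sign_vectors_exp_le:
  "(\<Sum>e\<in>sign_vectors n. exp (\<Sum>t<n. e t * v t)) \<le> 2 ^ n * exp ((\<Sum>t<n. (v t)\<^sup>2) / 2)"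
proof -
  have "(\<Sum>e\<in>sign_vectors n. exp (\<Sum>t<n. e t * v t)) = (\<Sum>e\<in>sign_vectors n. \<Prod>t<n. exp (e t * v t))"
    by (simp add: exp_sum)
  also have "\<dots> = (\<Prod>t<n. \<Sum>y\<in>{-1, 1}. exp (y * v t))"
    unfolding sign_vectors_def by (rule prod_sum_PiE[symmetric]) auto
  also have "\<dots> = (\<Prod>t<n. 2 * cosh (v t))"
    by (intro prod.cong refl) (simp add: cosh_field_def)
  also have "\<dots> \<le> (\<Prod>t<n. 2 * exp ((v t)\<^sup>2 / 2))"
    by (intro prod_mono) (simp add: cosh_le_exp_half_square)
  also have "\<dots> = 2 ^ n * exp ((\<Sum>t<n. (v t)\<^sup>2) / 2)"
    by (simp add: prod.distrib exp_sum sum_divide_distrib)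
  finally show ?thesis .
qed

lemma exp_abs_le_exp_plus_exp_uminus: "exp \<bar>x\<bar> \<le> exp x + exp (- x :: real)"
  by (cases "x \<ge> 0") (simp_all add: add_increasing add_increasing2)

lemma sum_sign_vectors_exp_Max_le:
  fixes Q :: "'q set" and v :: "'q \<Rightarrow> nat \<Rightarrow> real"
  assumes "finite Q" and "Q \<noteq> {}" and "s \<ge> 0"
    and norm_le: "\<And>q. q \<in> Q \<Longrightarrow> (\<Sum>t<n. (v q t)\<^sup>2) \<le> r\<^sup>2"
  shows "(\<Sum>e\<in>sign_vectors n. exp (s * Max ((\<lambda>q. \<bar>\<Sum>t<n. e t * v q t\<bar>) ` Q)))
    \<le> 2 * card Q * 2 ^ n * exp (s\<^sup>2 * r\<^sup>2 / 2)"
proof -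
  define mgf where "mgf s' q = (\<Sum>e\<in>sign_vectors n. exp (\<Sum>t<n. e t * (s' * v q t)))" for s' q
  have exp_Max_le: "exp (s * Max ((\<lambda>q. \<bar>\<Sum>t<n. e t * v q t\<bar>) ` Q))
      \<le> (\<Sum>q\<in>Q. exp (\<Sum>t<n. e t * (s * v q t)) + exp (\<Sum>t<n. e t * (- s * v q t)))" for e
  proof -
    have "Max ((\<lambda>q. \<bar>\<Sum>t<n. e t * v q t\<bar>) ` Q) \<in> (\<lambda>q. \<bar>\<Sum>t<n. e t * v q t\<bar>) ` Q"
      using assms(1,2) by (intro Max_in) auto
    then obtain q where "q \<in> Q" and q: "Max ((\<lambda>q. \<bar>\<Sum>t<n. e t * v q t\<bar>) ` Q) = \<bar>\<Sum>t<n. e t * v q t\<bar>"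
      by auto
    have "exp (s * \<bar>\<Sum>t<n. e t * v q t\<bar>) \<le> exp (s * (\<Sum>t<n. e t * v q t)) + exp (- (s * (\<Sum>t<n. e t * v q t)))"
      using exp_abs_le_exp_plus_exp_uminus[of "s * (\<Sum>t<n. e t * v q t)"] \<open>s \<ge> 0\<close>
      by (simp add: abs_mult)
    also have "\<dots> = exp (\<Sum>t<n. e t * (s * v q t)) + exp (\<Sum>t<n. e t * (- s * v q t))"
      by (simp add: sum_distrib_left sum_negf mult_ac)
    also have "\<dots> \<le> (\<Sum>q\<in>Q. exp (\<Sum>t<n. e t * (s * v q t)) + exp (\<Sum>t<n. e t * (- s * v q t)))"
      by (rule member_le_sum) (use \<open>q \<in> Q\<close> assms(1) in auto)
    finally show ?thesis
      by (simp only: q)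
  qed
  have mgf_le: "mgf s' q \<le> 2 ^ n * exp (s\<^sup>2 * r\<^sup>2 / 2)" if "q \<in> Q" and "s'\<^sup>2 = s\<^sup>2" for q s'
  proof -
    have "(\<Sum>t<n. (s' * v q t)\<^sup>2) = s\<^sup>2 * (\<Sum>t<n. (v q t)\<^sup>2)"
      using that(2) by (simp add: power_mult_distrib sum_distrib_left)
    also have "\<dots> \<le> s\<^sup>2 * r\<^sup>2"
      using norm_le[OF that(1)] by (simp add: mult_left_mono)
    finally have "2 ^ n * exp ((\<Sum>t<n. (s' * v q t)\<^sup>2) / 2) \<le> 2 ^ n * exp (s\<^sup>2 * r\<^sup>2 / 2)"
      by simp
    then show ?thesis
      using sum_sign_vectors_exp_le[where v = "\<lambda>t. s' * v q t" and n = n] unfolding mgf_def by linarith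
  qed
  have "(\<Sum>e\<in>sign_vectors n. exp (s * Max ((\<lambda>q. \<bar>\<Sum>t<n. e t * v q t\<bar>) ` Q)))
      \<le> (\<Sum>q\<in>Q. mgf s q + mgf (- s) q)"
    using sum_mono[OF exp_Max_le] unfolding mgf_def
    by (simp add: sum.swap[of _ "sign_vectors n" Q] sum.distrib)
  also have "\<dots> \<le> (\<Sum>q\<in>Q. 2 * (2 ^ n * exp (s\<^sup>2 * r\<^sup>2 / 2)))"
    using add_mono[OF mgf_le[of _ s] mgf_le[of _ "- s"]] by (intro sum_mono) simp
  finally show ?thesis
    by (simp add: mult_ac)
qed

lemma massart_finite_class:
  fixes Q :: "'q set" and v :: "'q \<Rightarrow> nat \<Rightarrow> real"
  assumes "finite Q" and "Q \<noteq> {}" and "r > 0"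
    and norm_le: "\<And>q. q \<in> Q \<Longrightarrow> (\<Sum>t<n. (v q t)\<^sup>2) \<le> r\<^sup>2"
  shows "(\<Sum>e\<in>sign_vectors n. Max ((\<lambda>q. \<bar>\<Sum>t<n. e t * v q t\<bar>) ` Q)) / 2 ^ n
    \<le> r * sqrt (2 * ln (2 * real (card Q)))"
proof -
  define Y where "Y e = Max ((\<lambda>q. \<bar>\<Sum>t<n. e t * v q t\<bar>) ` Q)" for e
  define c where "c = ln (2 * real (card Q))"
  define s where "s = sqrt (2 * c) / r"
  have "card Q \<ge> 1"
    using assms(1,2) by (simp add: Suc_leI card_gt_0_iff)
  then have "c > 0"
    by (simp add: c_def)
  then have "s > 0"
    using \<open>r > 0\<close> by (simp add: s_def)
  have "exp (s * ((\<Sum>e\<in>sign_vectors n. Y e) / 2 ^ n)) \<le> (\<Sum>e\<in>sign_vectors n. exp (s * Y e)) / 2 ^ n"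
    using convex_on_sum[of "sign_vectors n" UNIV "\<lambda>x. exp (s * x)" "\<lambda>_. 1 / 2 ^ n" Y]
      convex_on_exp[of s] \<open>s > 0\<close>
    by (simp add: finite_sign_vectors sign_vectors_nonempty card_sign_vectors
        sum_divide_distrib[symmetric] sum_distrib_left[symmetric])
  also have "\<dots> \<le> 2 * card Q * exp (s\<^sup>2 * r\<^sup>2 / 2)"
    using sum_sign_vectors_exp_Max_le[OF assms(1,2), where s = s and n = n and v = v and r = r] norm_le \<open>s > 0\<close>
    by (simp add: Y_def field_simps)
  finally have "s * ((\<Sum>e\<in>sign_vectors n. Y e) / 2 ^ n) \<le> ln (2 * card Q * exp (s\<^sup>2 * r\<^sup>2 / 2))"
    using \<open>card Q \<ge> 1\<close> by (subst ln_ge_iff) auto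
  also have "\<dots> = c + s\<^sup>2 * r\<^sup>2 / 2"
    using \<open>card Q \<ge> 1\<close> by (simp add: ln_mult c_def)
  finally have "(\<Sum>e\<in>sign_vectors n. Y e) / 2 ^ n \<le> (c + s\<^sup>2 * r\<^sup>2 / 2) / s"
    using \<open>s > 0\<close> by (simp add: le_divide_eq mult.commute)
  also have "\<dots> = r * sqrt (2 * c)"
    using \<open>c > 0\<close> \<open>r > 0\<close> by (simp add: s_def field_simps power2_eq_square)
  finally show ?thesis
    by (simp add: Y_def c_def)
qed

lemma massart_finite_class_bounded:
  fixes Q :: "'q set" and v :: "'q \<Rightarrow> nat \<Rightarrow> real"
  assumes "finite Q" and "Q \<noteq> {}" and "b > 0" and "n > 0"
    and bound: "\<And>q t. q \<in> Q \<Longrightarrow> t < n \<Longrightarrow> \<bar>v q t\<bar> \<le> b"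
  shows "(\<Sum>e\<in>sign_vectors n. Max ((\<lambda>q. \<bar>\<Sum>t<n. e t * v q t\<bar>) ` Q)) / 2 ^ n
    \<le> b * sqrt n * sqrt (2 * ln (2 * real (card Q)))"
proof (rule massart_finite_class[OF assms(1,2)])
  show "b * sqrt n > 0"
    using assms(3,4) by simp
  fix q assume "q \<in> Q"
  have "(\<Sum>t<n. (v q t)\<^sup>2) \<le> (\<Sum>t<n. b\<^sup>2)"
    using bound[OF \<open>q \<in> Q\<close>] by (intro sum_mono) (metis abs_ge_zero lessThan_iff power2_abs power_mono)
  then show "(\<Sum>t<n. (v q t)\<^sup>2) \<le> (b * sqrt n)\<^sup>2"
    by (simp add: power_mult_distrib mult.commute)
qed

lemma sum_sign_vectors_abs_sum_le:
  "(\<Sum>e\<in>sign_vectors n. \<bar>\<Sum>t<n. e t\<bar>) / 2 ^ n \<le> sqrt n * sqrt (2 * ln 2)"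
proof (cases "n = 0")
  case False
  have "(\<Sum>e\<in>sign_vectors n. Max ((\<lambda>_. \<bar>\<Sum>t<n. e t * 1\<bar>) ` {()})) / 2 ^ n
      \<le> 1 * sqrt n * sqrt (2 * ln (2 * real (card {()})))"
    using False by (intro massart_finite_class_bounded) simp_all
  then show ?thesis
    by simp
qed (simp add: sign_vectors_def)

lemma rademacher_emp_shift_le:
  fixes c :: "'p \<Rightarrow> real" and g :: "'p \<Rightarrow> 'x \<Rightarrow> real"
  assumes "P \<noteq> {}" and "n \<ge> 1"
    and c: "\<And>q. q \<in> P \<Longrightarrow> \<bar>c q\<bar> \<le> C"
    and g: "\<And>q t. q \<in> P \<Longrightarrow> t < n \<Longrightarrow> \<bar>g q (X t)\<bar> \<le> B"
  shows "rademacher_emp n X ((\<lambda>q x. c q + g q x) ` P)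
    \<le> (C * ((\<Sum>e\<in>sign_vectors n. \<bar>\<Sum>t<n. e t\<bar>) / 2 ^ n)
        + (\<Sum>e\<in>sign_vectors n. SUP q\<in>P. \<bar>\<Sum>t<n. e t * g q (X t)\<bar>) / 2 ^ n) / n"
proof -
  define G where "G e = (SUP q\<in>P. \<bar>\<Sum>t<n. e t * g q (X t)\<bar>)" for e :: "nat \<Rightarrow> real"
  have sup_le: "(SUP q\<in>P. \<bar>1 / real n * (\<Sum>t<n. e t * (c q + g q (X t)))\<bar>)
      \<le> (C * \<bar>\<Sum>t<n. e t\<bar> + G e) / n" if "e \<in> sign_vectors n" for e
  proof (rule cSUP_least[OF \<open>P \<noteq> {}\<close>])
    fix q assume "q \<in> P"
    have "\<bar>\<Sum>t<n. e t * g p (X t)\<bar> \<le> n * B" if "p \<in> P" for p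
    proof -
      have "\<bar>\<Sum>t<n. e t * g p (X t)\<bar> \<le> (\<Sum>t<n. \<bar>e t\<bar> * \<bar>g p (X t)\<bar>)"
        using sum_abs[of "\<lambda>t. e t * g p (X t)" "{..<n}"] by (simp add: abs_mult)
      also have "\<dots> \<le> (\<Sum>t<n. 1 * B)"
        using abs_le_one_of_mem_sign_vectors[OF \<open>e \<in> sign_vectors n\<close>] g[OF that]
        by (intro sum_mono mult_mono) auto
      finally show ?thesis
        by simp
    qed
    then have "\<bar>\<Sum>t<n. e t * g q (X t)\<bar> \<le> G e"
      unfolding G_def by (intro cSUP_upper \<open>q \<in> P\<close> bdd_aboveI2)
    moreover have "\<bar>c q * (\<Sum>t<n. e t)\<bar> \<le> C * \<bar>\<Sum>t<n. e t\<bar>"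
      using c[OF \<open>q \<in> P\<close>] by (simp add: abs_mult mult_right_mono)
    moreover have "(\<Sum>t<n. e t * (c q + g q (X t))) = c q * (\<Sum>t<n. e t) + (\<Sum>t<n. e t * g q (X t))"
      by (simp add: distrib_left sum.distrib sum_distrib_left mult_ac)
    ultimately have "\<bar>\<Sum>t<n. e t * (c q + g q (X t))\<bar> \<le> C * \<bar>\<Sum>t<n. e t\<bar> + G e"
      using abs_triangle_ineq[of "c q * (\<Sum>t<n. e t)" "\<Sum>t<n. e t * g q (X t)"] by linarith
    then show "\<bar>1 / real n * (\<Sum>t<n. e t * (c q + g q (X t)))\<bar> \<le> (C * \<bar>\<Sum>t<n. e t\<bar> + G e) / n"
      by (simp add: abs_mult divide_right_mono)
  qed
  have "rademacher_emp n X ((\<lambda>q x. c q + g q x) ` P)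
      \<le> (\<Sum>e\<in>sign_vectors n. (C * \<bar>\<Sum>t<n. e t\<bar> + G e) / n) / 2 ^ n"
    unfolding rademacher_emp_def sign_vectors_def[symmetric] image_image
    by (intro divide_right_mono sum_mono sup_le) simp_all
  also have "\<dots> = (C * ((\<Sum>e\<in>sign_vectors n. \<bar>\<Sum>t<n. e t\<bar>) / 2 ^ n)
      + (\<Sum>e\<in>sign_vectors n. G e) / 2 ^ n) / n"
    by (simp add: sum_divide_distrib[symmetric] sum.distrib sum_distrib_left add_divide_distrib mult.commute)
  finally show ?thesis
    by (simp add: G_def)
qed

lemma sum_sign_vectors_SUP_le:
  fixes F :: "'p \<Rightarrow> (nat \<Rightarrow> real) \<Rightarrow> real"
  assumes "P \<noteq> {}" and "\<And>e q. e \<in> sign_vectors n \<Longrightarrow> q \<in> P \<Longrightarrow> F q e \<le> a + (\<Sum>j<N. Y j e)"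
  shows "(\<Sum>e\<in>sign_vectors n. SUP q\<in>P. F q e) / 2 ^ n \<le> a + (\<Sum>j<N. (\<Sum>e\<in>sign_vectors n. Y j e) / 2 ^ n)"
proof -
  have "(\<Sum>e\<in>sign_vectors n. SUP q\<in>P. F q e) \<le> (\<Sum>e\<in>sign_vectors n. a + (\<Sum>j<N. Y j e))"
    by (intro sum_mono cSUP_least assms)
  also have "\<dots> = 2 ^ n * a + (\<Sum>e\<in>sign_vectors n. \<Sum>j<N. Y j e)"
    by (simp add: sum.distrib card_sign_vectors)
  also have "(\<Sum>e\<in>sign_vectors n. \<Sum>j<N. Y j e) = (\<Sum>j<N. \<Sum>e\<in>sign_vectors n. Y j e)"
    by (rule sum.swap)
  finally have "(\<Sum>e\<in>sign_vectors n. SUP q\<in>P. F q e) / 2 ^ n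
      \<le> (2 ^ n * a + (\<Sum>j<N. \<Sum>e\<in>sign_vectors n. Y j e)) / 2 ^ n"
    by (rule divide_right_mono) simp
  also have "\<dots> = a + (\<Sum>j<N. (\<Sum>e\<in>sign_vectors n. Y j e) / 2 ^ n)"
    by (simp add: add_divide_distrib sum_divide_distrib)
  finally show ?thesis .
qed

section \<open>Chaining\<close>

lemma chaining_pointwise:
  fixes f :: "'p \<Rightarrow> 'x \<Rightarrow> real" and \<pi> :: "nat \<Rightarrow> 'p \<Rightarrow> 'p"
  assumes coarsest: "\<And>x. f (\<pi> 0 q) x = 0"
    and approx: "\<And>t. t < n \<Longrightarrow> \<bar>f q (X t) - f (\<pi> n q) (X t)\<bar> \<le> (1 / 2) ^ n"
    and signs: "\<And>t. t < n \<Longrightarrow> \<bar>e t\<bar> \<le> 1"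
  shows "\<bar>\<Sum>t<n. e t * f q (X t)\<bar>
    \<le> n * (1 / 2) ^ n + (\<Sum>j<n. \<bar>\<Sum>t<n. e t * (f (\<pi> (Suc j) q) (X t) - f (\<pi> j q) (X t))\<bar>)"
proof -
  define link where "link j t = e t * (f (\<pi> (Suc j) q) (X t) - f (\<pi> j q) (X t))" for j t
  have "(\<Sum>j<n. link j t) = e t * f (\<pi> n q) (X t)" for t
    using sum_lessThan_telescope[of "\<lambda>j. f (\<pi> j q) (X t)" n]
    by (simp add: link_def coarsest flip: sum_distrib_left)
  then have "e t * f q (X t) = e t * (f q (X t) - f (\<pi> n q) (X t)) + (\<Sum>j<n. link j t)" for t
    by (simp add: algebra_simps)
  then have "(\<Sum>t<n. e t * f q (X t))
      = (\<Sum>t<n. e t * (f q (X t) - f (\<pi> n q) (X t))) + (\<Sum>t<n. \<Sum>j<n. link j t)"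
    by (simp only: sum.distrib[symmetric])
  also have "(\<Sum>t<n. \<Sum>j<n. link j t) = (\<Sum>j<n. \<Sum>t<n. link j t)"
    by (rule sum.swap)
  finally have "\<bar>\<Sum>t<n. e t * f q (X t)\<bar>
      \<le> \<bar>\<Sum>t<n. e t * (f q (X t) - f (\<pi> n q) (X t))\<bar> + \<bar>\<Sum>j<n. \<Sum>t<n. link j t\<bar>"
    by (simp only: abs_triangle_ineq)
  also have "\<dots> \<le> (\<Sum>t<n. (1 / 2) ^ n) + (\<Sum>j<n. \<bar>\<Sum>t<n. link j t\<bar>)"
  proof (rule add_mono)
    show "\<bar>\<Sum>t<n. e t * (f q (X t) - f (\<pi> n q) (X t))\<bar> \<le> (\<Sum>t<n. (1 / 2) ^ n)"
    proof (rule order_trans[OF sum_abs], rule sum_mono)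
      fix t assume "t \<in> {..<n}"
      then have "\<bar>e t\<bar> * \<bar>f q (X t) - f (\<pi> n q) (X t)\<bar> \<le> 1 * (1 / 2) ^ n"
        by (intro mult_mono) (simp_all add: approx signs)
      then show "\<bar>e t * (f q (X t) - f (\<pi> n q) (X t))\<bar> \<le> (1 / 2) ^ n"
        by (simp add: abs_mult)
    qed
  qed (rule sum_abs)
  finally show ?thesis
    by (simp add: link_def)
qed

lemma chaining_link_le:
  fixes f :: "'p \<Rightarrow> 'x \<Rightarrow> real" and \<pi> :: "nat \<Rightarrow> 'p \<Rightarrow> 'p" and K :: "nat \<Rightarrow> real"
  assumes "P \<noteq> {}" and "j < n"
    and approx: "\<And>i q t. q \<in> P \<Longrightarrow> t < n \<Longrightarrow> \<bar>f q (X t) - f (\<pi> i q) (X t)\<bar> \<le> (1 / 2) ^ i"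
    and finite: "\<And>i. finite (\<pi> i ` P)"
    and card: "\<And>i. real (card (\<pi> i ` P)) \<le> K i"
  shows "(\<Sum>e\<in>sign_vectors n. Max ((\<lambda>q. \<bar>\<Sum>t<n. e t * (f (\<pi> (Suc j) q) (X t) - f (\<pi> j q) (X t))\<bar>) ` P)) / 2 ^ n
    \<le> sqrt n * (3 * (1 / 2) ^ (j + 1) * sqrt (2 * ln (2 * (K (Suc j) * K j))))"
proof -
  define links where "links = (\<lambda>q. (\<pi> (Suc j) q, \<pi> j q)) ` P"
  define increment where "increment ab t = f (fst ab) (X t) - f (snd ab) (X t)" for ab t
  have links_sub: "links \<subseteq> \<pi> (Suc j) ` P \<times> \<pi> j ` P"
    by (auto simp: links_def)
  then have "finite links"
    using finite finite_subset by blast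
  have "links \<noteq> {}"
    using \<open>P \<noteq> {}\<close> by (simp add: links_def)
  have "card links \<le> card (\<pi> (Suc j) ` P) * card (\<pi> j ` P)"
    using card_mono[OF _ links_sub] finite by (simp add: card_cartesian_product)
  then have "real (card links) \<le> real (card (\<pi> (Suc j) ` P)) * real (card (\<pi> j ` P))"
    by (simp flip: of_nat_mult)
  also have "\<dots> \<le> K (Suc j) * K j"
    by (intro mult_mono card) (auto intro: order_trans[OF _ card])
  finally have card_links: "real (card links) \<le> K (Suc j) * K j" .
  have "\<bar>increment ab t\<bar> \<le> 3 * (1 / 2) ^ (j + 1)" if "ab \<in> links" and "t < n" for ab t
  proof -
    obtain q where "q \<in> P" and ab: "ab = (\<pi> (Suc j) q, \<pi> j q)"
      using \<open>ab \<in> links\<close> by (auto simp: links_def)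
    have "\<bar>increment ab t\<bar> \<le> (1 / 2) ^ Suc j + (1 / 2) ^ j"
      using approx[OF \<open>q \<in> P\<close> \<open>t < n\<close>, of j] approx[OF \<open>q \<in> P\<close> \<open>t < n\<close>, of "Suc j"]
      unfolding ab increment_def fst_conv snd_conv by arith
    then show ?thesis
      by simp
  qed
  then have "(\<Sum>e\<in>sign_vectors n. Max ((\<lambda>ab. \<bar>\<Sum>t<n. e t * increment ab t\<bar>) ` links)) / 2 ^ n
      \<le> 3 * (1 / 2) ^ (j + 1) * sqrt n * sqrt (2 * ln (2 * real (card links)))"
    using \<open>j < n\<close> by (intro massart_finite_class_bounded \<open>finite links\<close> \<open>links \<noteq> {}\<close>) auto
  also have "\<dots> \<le> 3 * (1 / 2) ^ (j + 1) * sqrt n * sqrt (2 * ln (2 * (K (Suc j) * K j)))"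
    using card_links \<open>finite links\<close> \<open>links \<noteq> {}\<close>
    by (intro mult_left_mono real_sqrt_le_mono ln_mono) (auto simp: card_gt_0_iff)
  finally have "(\<Sum>e\<in>sign_vectors n. Max ((\<lambda>ab. \<bar>\<Sum>t<n. e t * increment ab t\<bar>) ` links)) / 2 ^ n
      \<le> sqrt n * (3 * (1 / 2) ^ (j + 1) * sqrt (2 * ln (2 * (K (Suc j) * K j))))"
    by (simp add: mult_ac)
  moreover have "(\<lambda>ab. \<bar>\<Sum>t<n. e t * increment ab t\<bar>) ` links
      = (\<lambda>q. \<bar>\<Sum>t<n. e t * (f (\<pi> (Suc j) q) (X t) - f (\<pi> j q) (X t))\<bar>) ` P" for e
    by (simp add: links_def increment_def image_image)
  ultimately show ?thesis
    by simp
qed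

lemma chaining_bound:
  fixes f :: "'p \<Rightarrow> 'x \<Rightarrow> real" and \<pi> :: "nat \<Rightarrow> 'p \<Rightarrow> 'p" and K :: "nat \<Rightarrow> real"
  assumes "P \<noteq> {}"
    and coarsest: "\<And>q x. q \<in> P \<Longrightarrow> f (\<pi> 0 q) x = 0"
    and approx: "\<And>j q t. q \<in> P \<Longrightarrow> t < n \<Longrightarrow> \<bar>f q (X t) - f (\<pi> j q) (X t)\<bar> \<le> (1 / 2) ^ j"
    and finite: "\<And>j. finite (\<pi> j ` P)"
    and card: "\<And>j. real (card (\<pi> j ` P)) \<le> K j"
  shows "(\<Sum>e\<in>sign_vectors n. SUP q\<in>P. \<bar>\<Sum>t<n. e t * f q (X t)\<bar>) / 2 ^ n
    \<le> n * (1 / 2) ^ n + sqrt n * (\<Sum>j<n. 3 * (1 / 2) ^ (j + 1) * sqrt (2 * ln (2 * (K (Suc j) * K j))))"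
proof -
  define Y where "Y j e = Max ((\<lambda>q. \<bar>\<Sum>t<n. e t * (f (\<pi> (Suc j) q) (X t) - f (\<pi> j q) (X t))\<bar>) ` P)" for j e
  have finite_increments: "finite ((\<lambda>q. \<bar>\<Sum>t<n. e t * (f (\<pi> (Suc j) q) (X t) - f (\<pi> j q) (X t))\<bar>) ` P)"
    for j e
  proof -
    have "(\<lambda>q. \<bar>\<Sum>t<n. e t * (f (\<pi> (Suc j) q) (X t) - f (\<pi> j q) (X t))\<bar>) ` P
        \<subseteq> (\<lambda>(a, b). \<bar>\<Sum>t<n. e t * (f a (X t) - f b (X t))\<bar>) ` (\<pi> (Suc j) ` P \<times> \<pi> j ` P)"
      by auto
    then show ?thesis
      using finite by (meson finite_SigmaI finite_imageI finite_subset)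
  qed
  have "\<bar>\<Sum>t<n. e t * f q (X t)\<bar> \<le> n * (1 / 2) ^ n + (\<Sum>j<n. Y j e)"
    if "e \<in> sign_vectors n" and "q \<in> P" for e q
  proof -
    have "\<bar>\<Sum>t<n. e t * f q (X t)\<bar>
        \<le> n * (1 / 2) ^ n + (\<Sum>j<n. \<bar>\<Sum>t<n. e t * (f (\<pi> (Suc j) q) (X t) - f (\<pi> j q) (X t))\<bar>)"
      by (rule chaining_pointwise[where f = f and \<pi> = \<pi> and q = q and X = X,
          OF coarsest[OF \<open>q \<in> P\<close>] approx[OF \<open>q \<in> P\<close>] abs_le_one_of_mem_sign_vectors[OF that(1)]])
    also have "\<dots> \<le> n * (1 / 2) ^ n + (\<Sum>j<n. Y j e)"
      unfolding Y_def using \<open>q \<in> P\<close> finite_increments by (intro add_left_mono sum_mono Max_ge) auto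
    finally show ?thesis .
  qed
  then have "(\<Sum>e\<in>sign_vectors n. SUP q\<in>P. \<bar>\<Sum>t<n. e t * f q (X t)\<bar>) / 2 ^ n
      \<le> n * (1 / 2) ^ n + (\<Sum>j<n. (\<Sum>e\<in>sign_vectors n. Y j e) / 2 ^ n)"
    using \<open>P \<noteq> {}\<close> by (intro sum_sign_vectors_SUP_le)
  also have "\<dots> \<le> n * (1 / 2) ^ n
      + (\<Sum>j<n. sqrt n * (3 * (1 / 2) ^ (j + 1) * sqrt (2 * ln (2 * (K (Suc j) * K j)))))"
    unfolding Y_def using assms(1,3-5) by (intro add_left_mono sum_mono chaining_link_le) auto
  finally show ?thesis
    by (simp only: sum_distrib_left)
qed

section \<open>Lipschitz estimates for maxout networks\<close>

lemma abs_sum_mult_le_L2_set: "\<bar>\<Sum>i\<in>A. f i * g i\<bar> \<le> L2_set f A * L2_set g A"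
  by (rule order_trans[OF sum_abs]) (simp add: abs_mult L2_set_mult_ineq)

lemma L2_set_scaled_le:
  assumes "B \<ge> 0" and "\<And>i. i < N \<Longrightarrow> \<bar>f i\<bar> \<le> B"
  shows "L2_set (\<lambda>i. 1 / sqrt (real N) * f i) {..<N} \<le> B"
proof -
  have "(f i)\<^sup>2 \<le> B\<^sup>2" if "i < N" for i
    using power_mono[OF assms(2)[OF that] abs_ge_zero, of 2] by simp
  then have "(\<Sum>i<N. (1 / sqrt (real N) * f i)\<^sup>2) \<le> (\<Sum>i<N. B\<^sup>2 / real N)"
    by (intro sum_mono) (simp add: power_mult_distrib power_divide divide_right_mono)
  also have "\<dots> \<le> B\<^sup>2"
    by simp
  finally show ?thesis
    using assms(1) by (simp add: L2_set_def real_le_lsqrt)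
qed

lemma abs_affine_le_L2_set:
  fixes w u :: "nat \<Rightarrow> real"
  shows "\<bar>(\<Sum>p<N. w p * u p) + w N * c\<bar> \<le> L2_set w {..N} * sqrt ((L2_set u {..<N})\<^sup>2 + c\<^sup>2)"
proof -
  define u' where "u' p = (if p < N then u p else c)" for p
  have "(\<Sum>p<N. w p * u p) + w N * c = (\<Sum>p\<le>N. w p * u' p)"
    by (simp add: u'_def lessThan_Suc_atMost[symmetric])
  moreover have "L2_set u' {..N} = sqrt ((L2_set u {..<N})\<^sup>2 + c\<^sup>2)"
    by (simp add: u'_def L2_set_def sum_nonneg lessThan_Suc_atMost[symmetric])
  ultimately show ?thesis
    using abs_sum_mult_le_L2_set by metis
qed

lemma L2_set_le_of_abs_le:
  assumes "\<And>i. i \<in> A \<Longrightarrow> \<bar>f i\<bar> \<le> \<bar>g i\<bar>"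
  shows "L2_set f A \<le> L2_set g A"
  unfolding L2_set_def using assms by (intro real_sqrt_le_mono sum_mono) (simp add: abs_le_square_iff)

lemma L2_set_le_1_iff: "L2_set f A \<le> 1 \<longleftrightarrow> (\<Sum>i\<in>A. (f i)\<^sup>2) \<le> 1"
  by (simp add: L2_set_def)

lemma Max_image_diff_abs_le:
  fixes f g :: "'a \<Rightarrow> real"
  assumes "finite K" and "K \<noteq> {}" and "\<And>j. j \<in> K \<Longrightarrow> \<bar>f j - g j\<bar> \<le> c"
  shows "\<bar>Max (f ` K) - Max (g ` K)\<bar> \<le> c"
proof -
  have "Max (f ` K) \<in> f ` K" and "Max (g ` K) \<in> g ` K"
    using assms(1,2) by (simp_all add: Max_in)
  then obtain j1 j2 where "j1 \<in> K" "j2 \<in> K" and j1: "Max (f ` K) = f j1" and j2: "Max (g ` K) = g j2"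
    by blast
  have "g j1 \<le> g j2" and "f j2 \<le> f j1"
    using \<open>j1 \<in> K\<close> \<open>j2 \<in> K\<close> assms(1) by (simp_all flip: j1 j2)
  then show ?thesis
    using assms(3)[OF \<open>j1 \<in> K\<close>] assms(3)[OF \<open>j2 \<in> K\<close>] by (simp add: j1 j2 abs_le_iff)
qed

definition maxout_unit_weights :: "nat \<Rightarrow> (nat \<Rightarrow> nat) \<Rightarrow> nat \<Rightarrow> (nat \<Rightarrow> nat \<Rightarrow> nat \<Rightarrow> nat \<Rightarrow> real) \<Rightarrow> bool" where
  "maxout_unit_weights L M k W \<longleftrightarrow>
     (\<forall>l \<in> {1..L-1}. \<forall>i < M (Suc l). \<forall>j < k. L2_set (W l i j) {..M l} \<le> 1)"

lemma maxout_pre_zero: "k \<ge> 1 \<Longrightarrow> maxout_pre M k (\<lambda>_ _ _ _. 0) l v i = 0"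
  by (simp add: maxout_pre_def image_constant_conv lessThan_empty_iff)

lemma maxout_pre_diff_le:
  assumes "k \<ge> 1"
    and close: "\<And>j. j < k \<Longrightarrow> L2_set (\<lambda>p. W l i j p - W' l i j p) {..M l} \<le> \<eta>"
    and unit: "\<And>j. j < k \<Longrightarrow> L2_set (W' l i j) {..M l} \<le> 1"
  shows "\<bar>maxout_pre M k W l v i - maxout_pre M k W' l v' i\<bar>
    \<le> \<eta> * sqrt ((L2_set v {..<M l})\<^sup>2 + 1) + L2_set (\<lambda>p. v p - v' p) {..<M l}"
  unfolding maxout_pre_def
proof (rule Max_image_diff_abs_le)
  fix j assume "j \<in> {..<k}"
  define \<delta> where "\<delta> = (\<lambda>p. W l i j p - W' l i j p)"
  define d where "d = (\<lambda>p. v p - v' p)"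
  have "((\<Sum>p<M l. W l i j p * v p) + W l i j (M l)) - ((\<Sum>p<M l. W' l i j p * v' p) + W' l i j (M l))
      = ((\<Sum>p<M l. \<delta> p * v p) + \<delta> (M l) * 1) + ((\<Sum>p<M l. W' l i j p * d p) + W' l i j (M l) * 0)"
    by (simp add: \<delta>_def d_def sum_subtractf sum.distrib algebra_simps)
  then have "\<bar>((\<Sum>p<M l. W l i j p * v p) + W l i j (M l)) - ((\<Sum>p<M l. W' l i j p * v' p) + W' l i j (M l))\<bar>
      \<le> \<bar>(\<Sum>p<M l. \<delta> p * v p) + \<delta> (M l) * 1\<bar> + \<bar>(\<Sum>p<M l. W' l i j p * d p) + W' l i j (M l) * 0\<bar>"
    by (simp only: abs_triangle_ineq)
  also have "\<dots> \<le> L2_set \<delta> {..M l} * sqrt ((L2_set v {..<M l})\<^sup>2 + 1\<^sup>2)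
      + L2_set (W' l i j) {..M l} * sqrt ((L2_set d {..<M l})\<^sup>2 + 0\<^sup>2)"
    by (rule add_mono abs_affine_le_L2_set)+
  also have "\<dots> = L2_set \<delta> {..M l} * sqrt ((L2_set v {..<M l})\<^sup>2 + 1) + L2_set (W' l i j) {..M l} * L2_set d {..<M l}"
    by simp
  also have "\<dots> \<le> \<eta> * sqrt ((L2_set v {..<M l})\<^sup>2 + 1) + 1 * L2_set d {..<M l}"
    using close[of j] unit[of j] \<open>j \<in> {..<k}\<close>
    by (intro add_mono mult_right_mono) (simp_all add: \<delta>_def)
  finally show "\<bar>((\<Sum>p<M l. W l i j p * v p) + W l i j (M l)) - ((\<Sum>p<M l. W' l i j p * v' p) + W' l i j (M l))\<bar>
      \<le> \<eta> * sqrt ((L2_set v {..<M l})\<^sup>2 + 1) + L2_set (\<lambda>p. v p - v' p) {..<M l}"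
    by (simp add: d_def)
qed (use \<open>k \<ge> 1\<close> in \<open>simp_all add: lessThan_empty_iff\<close>)

lemma maxout_hidden_Suc:
  "l \<ge> 1 \<Longrightarrow> maxout_hidden M k W (Suc l) x
     = (\<lambda>i. 1 / sqrt (real (M (Suc l))) * maxout_pre M k W l (maxout_hidden M k W l x) i)"
  by (cases l) auto

lemma L2_maxout_hidden_le:
  assumes "k \<ge> 1" and unit: "maxout_unit_weights L M k W" and x: "L2_set x {..<M 1} \<le> 1"
  shows "1 \<le> l \<Longrightarrow> l \<le> L \<Longrightarrow> L2_set (maxout_hidden M k W l x) {..<M l} \<le> sqrt l"
proof (induction l rule: nat_induct_at_least)
  case base
  then show ?case
    using x by simp
next
  case (Suc l)
  show ?case
    unfolding maxout_hidden_Suc[OF \<open>l \<ge> 1\<close>]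
  proof (rule L2_set_scaled_le)
    fix i assume "i < M (Suc l)"
    have "\<bar>maxout_pre M k W l (maxout_hidden M k W l x) i - maxout_pre M k (\<lambda>_ _ _ _. 0) l (maxout_hidden M k W l x) i\<bar>
        \<le> 1 * sqrt ((L2_set (maxout_hidden M k W l x) {..<M l})\<^sup>2 + 1)
          + L2_set (\<lambda>p. maxout_hidden M k W l x p - maxout_hidden M k W l x p) {..<M l}"
      using unit Suc \<open>i < M (Suc l)\<close>
      by (intro maxout_pre_diff_le \<open>k \<ge> 1\<close>) (auto simp: maxout_unit_weights_def L2_set_constant)
    also have "\<dots> \<le> sqrt (Suc l)"
    proof -
      have "(L2_set (maxout_hidden M k W l x) {..<M l})\<^sup>2 \<le> (sqrt l)\<^sup>2"
        using Suc by (intro power_mono) auto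
      then show ?thesis
        by (simp add: L2_set_constant)
    qed
    finally show "\<bar>maxout_pre M k W l (maxout_hidden M k W l x) i\<bar> \<le> sqrt (Suc l)"
      using maxout_pre_zero[OF \<open>k \<ge> 1\<close>, of M l "maxout_hidden M k W l x" i] by simp
  qed simp
qed

lemma L2_maxout_hidden_diff_le:
  assumes "k \<ge> 1" and unit: "maxout_unit_weights L M k W" and unit': "maxout_unit_weights L M k W'"
    and x: "L2_set x {..<M 1} \<le> 1" and "\<eta> \<ge> 0"
    and close: "\<And>l i j. l \<in> {1..L-1} \<Longrightarrow> i < M (Suc l) \<Longrightarrow> j < k \<Longrightarrow>
      L2_set (\<lambda>p. W l i j p - W' l i j p) {..M l} \<le> \<eta>"
  shows "1 \<le> l \<Longrightarrow> l \<le> L \<Longrightarrow>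
    L2_set (\<lambda>p. maxout_hidden M k W l x p - maxout_hidden M k W' l x' p) {..<M l}
      \<le> (real l - 1) * \<eta> * sqrt L + L2_set (\<lambda>p. x p - x' p) {..<M 1}"
proof (induction l rule: nat_induct_at_least)
  case base
  then show ?case
    by simp
next
  case (Suc l)
  define h where "h = maxout_hidden M k W l x"
  define h' where "h' = maxout_hidden M k W' l x'"
  have "L2_set (\<lambda>i. 1 / sqrt (M (Suc l)) * (maxout_pre M k W l h i - maxout_pre M k W' l h' i)) {..<M (Suc l)}
      \<le> (real (Suc l) - 1) * \<eta> * sqrt L + L2_set (\<lambda>p. x p - x' p) {..<M 1}"
  proof (rule L2_set_scaled_le)
    show "0 \<le> (real (Suc l) - 1) * \<eta> * sqrt L + L2_set (\<lambda>p. x p - x' p) {..<M 1}"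
      using \<open>\<eta> \<ge> 0\<close> by simp
    fix i assume "i < M (Suc l)"
    have "(L2_set h {..<M l})\<^sup>2 + 1 \<le> L"
    proof -
      have "(L2_set h {..<M l})\<^sup>2 \<le> (sqrt l)\<^sup>2"
        using L2_maxout_hidden_le[OF \<open>k \<ge> 1\<close> unit x] Suc by (intro power_mono) (auto simp: h_def)
      then show ?thesis
        using Suc by simp
    qed
    then have "\<eta> * sqrt ((L2_set h {..<M l})\<^sup>2 + 1) \<le> \<eta> * sqrt L"
      using \<open>\<eta> \<ge> 0\<close> by (intro mult_left_mono) simp_all
    moreover have "\<bar>maxout_pre M k W l h i - maxout_pre M k W' l h' i\<bar>
        \<le> \<eta> * sqrt ((L2_set h {..<M l})\<^sup>2 + 1) + L2_set (\<lambda>p. h p - h' p) {..<M l}"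
      using Suc \<open>i < M (Suc l)\<close> unit'
      by (intro maxout_pre_diff_le \<open>k \<ge> 1\<close> close) (auto simp: maxout_unit_weights_def)
    moreover have "L2_set (\<lambda>p. h p - h' p) {..<M l} \<le> (real l - 1) * \<eta> * sqrt L + L2_set (\<lambda>p. x p - x' p) {..<M 1}"
      using Suc by (simp add: h_def h'_def)
    ultimately show "\<bar>maxout_pre M k W l h i - maxout_pre M k W' l h' i\<bar>
        \<le> (real (Suc l) - 1) * \<eta> * sqrt L + L2_set (\<lambda>p. x p - x' p) {..<M 1}"
      by (simp add: algebra_simps)
  qed
  then show ?case
    by (simp add: maxout_hidden_Suc[OF \<open>l \<ge> 1\<close>] h_def h'_def right_diff_distrib)
qed

lemma maxout_net_eq_sum:
  assumes "L \<ge> 2"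
  shows "maxout_net L M k W a x = (\<Sum>i<M L. a i * maxout_hidden M k W L x i)"
proof -
  obtain l where "L = Suc (Suc l)"
    using assms by (metis add_2_eq_Suc le_Suc_ex)
  then show ?thesis
    by (simp add: maxout_net_def sum_distrib_left mult_ac)
qed

lemma maxout_net_diff_le:
  assumes "L \<ge> 2" and "k \<ge> 1"
    and unit: "maxout_unit_weights L M k W" and unit': "maxout_unit_weights L M k W'"
    and a': "L2_set a' {..<M L} \<le> 1" and x: "L2_set x {..<M 1} \<le> 1" and "\<eta> \<ge> 0"
    and close: "\<And>l i j. l \<in> {1..L-1} \<Longrightarrow> i < M (Suc l) \<Longrightarrow> j < k \<Longrightarrow>
      L2_set (\<lambda>p. W l i j p - W' l i j p) {..M l} \<le> \<eta>"
  shows "\<bar>maxout_net L M k W a x - maxout_net L M k W' a' x'\<bar>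
    \<le> L2_set (\<lambda>i. a i - a' i) {..<M L} * sqrt L + (real L - 1) * \<eta> * sqrt L
      + L2_set (\<lambda>p. x p - x' p) {..<M 1}"
proof -
  define h where "h = maxout_hidden M k W L x"
  define h' where "h' = maxout_hidden M k W' L x'"
  have "maxout_net L M k W a x - maxout_net L M k W' a' x'
      = (\<Sum>i<M L. (a i - a' i) * h i) + (\<Sum>i<M L. a' i * (h i - h' i))"
    by (simp add: maxout_net_eq_sum[OF \<open>L \<ge> 2\<close>] h_def h'_def algebra_simps sum_subtractf)
  then have "\<bar>maxout_net L M k W a x - maxout_net L M k W' a' x'\<bar>
      \<le> \<bar>\<Sum>i<M L. (a i - a' i) * h i\<bar> + \<bar>\<Sum>i<M L. a' i * (h i - h' i)\<bar>"
    by (simp only: abs_triangle_ineq)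
  also have "\<dots> \<le> L2_set (\<lambda>i. a i - a' i) {..<M L} * L2_set h {..<M L}
      + L2_set a' {..<M L} * L2_set (\<lambda>i. h i - h' i) {..<M L}"
    by (rule add_mono abs_sum_mult_le_L2_set)+
  also have "\<dots> \<le> L2_set (\<lambda>i. a i - a' i) {..<M L} * sqrt L
      + 1 * ((real L - 1) * \<eta> * sqrt L + L2_set (\<lambda>p. x p - x' p) {..<M 1})"
    using L2_maxout_hidden_le[OF \<open>k \<ge> 1\<close> unit x, of L]
      L2_maxout_hidden_diff_le[OF \<open>k \<ge> 1\<close> unit unit' x \<open>\<eta> \<ge> 0\<close> close, of L x'] \<open>L \<ge> 2\<close> a'
    by (intro add_mono mult_mono) (simp_all add: h_def h'_def)
  finally show ?thesis
    by (simp add: add.assoc)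
qed

definition maxout_params :: "nat \<Rightarrow> (nat \<Rightarrow> nat) \<Rightarrow> nat
    \<Rightarrow> ((nat \<Rightarrow> nat \<Rightarrow> nat \<Rightarrow> nat \<Rightarrow> real) \<times> (nat \<Rightarrow> real)) set" where
  "maxout_params L M k = {(W, a). maxout_unit_weights L M k W \<and> L2_set a {..<M L} \<le> 1}"

lemma mem_maxout_params:
  "q \<in> maxout_params L M k \<longleftrightarrow> maxout_unit_weights L M k (fst q) \<and> L2_set (snd q) {..<M L} \<le> 1"
  by (cases q) (simp add: maxout_params_def)

lemma maxout_class_eq_image:
  "maxout_class L M k = (\<lambda>q. maxout_net L M k (fst q) (snd q)) ` maxout_params L M k"
  by (force simp: maxout_class_def maxout_params_def maxout_unit_weights_def L2_set_le_1_iff)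

lemma maxout_zero_mem_params: "((\<lambda>_ _ _ _. 0), (\<lambda>_. 0)) \<in> maxout_params L M k"
  by (simp add: maxout_params_def maxout_unit_weights_def L2_set_constant)

lemma maxout_net_zero_output_weights: "L \<ge> 2 \<Longrightarrow> maxout_net L M k W (\<lambda>_. 0) x = 0"
  by (simp add: maxout_net_eq_sum)

lemma abs_maxout_net_le:
  assumes "L \<ge> 2" and "k \<ge> 1" and q: "q \<in> maxout_params L M k" and x: "L2_set x {..<M 1} \<le> 1"
  shows "\<bar>maxout_net L M k (fst q) (snd q) x\<bar> \<le> sqrt L"
proof -
  have "\<bar>maxout_net L M k (fst q) (snd q) x - maxout_net L M k (fst q) (\<lambda>_. 0) x\<bar>
      \<le> L2_set (\<lambda>i. snd q i - 0) {..<M L} * sqrt L + (real L - 1) * 0 * sqrt L + L2_set (\<lambda>p. x p - x p) {..<M 1}"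
    using q by (intro maxout_net_diff_le assms(1,2) x) (auto simp: maxout_params_def L2_set_constant)
  also have "\<dots> = L2_set (snd q) {..<M L} * sqrt L"
    by (simp add: L2_set_constant)
  also have "\<dots> \<le> 1 * sqrt L"
    using q by (intro mult_right_mono) (simp_all add: mem_maxout_params)
  finally show ?thesis
    by (simp add: maxout_net_zero_output_weights[OF assms(1)])
qed

lemma abs_maxout_net_input_diff_le:
  assumes "L \<ge> 2" and "k \<ge> 1" and q: "q \<in> maxout_params L M k" and x: "L2_set x {..<M 1} \<le> 1"
  shows "\<bar>maxout_net L M k (fst q) (snd q) x - maxout_net L M k (fst q) (snd q) x'\<bar>
    \<le> L2_set (\<lambda>p. x p - x' p) {..<M 1}"
  using maxout_net_diff_le[OF assms(1,2), where M = M and W = "fst q" and W' = "fst q" and a = "snd q"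
      and a' = "snd q" and x = x and x' = x' and \<eta> = 0] q x
  by (simp add: mem_maxout_params L2_set_constant)

section \<open>Counting truncations to a grid\<close>

text \<open>Rounding towards zero rather than to the nearest grid point keeps truncated weight vectors in
  the unit ball.\<close>

definition truncate_to_grid :: "real \<Rightarrow> real \<Rightarrow> real" where
  "truncate_to_grid h w = (if w < 0 then - 1 else 1) * (h * real (nat \<lfloor>\<bar>w\<bar> / h\<rfloor>))"

lemma
  assumes "h > 0"
  shows abs_truncate_to_grid_le: "\<bar>truncate_to_grid h w\<bar> \<le> \<bar>w\<bar>"
    and abs_diff_truncate_to_grid_le: "\<bar>w - truncate_to_grid h w\<bar> \<le> h"
proof -
  define s where "s = h * real (nat \<lfloor>\<bar>w\<bar> / h\<rfloor>)"
  have floor_eq: "real (nat \<lfloor>\<bar>w\<bar> / h\<rfloor>) = of_int \<lfloor>\<bar>w\<bar> / h\<rfloor>"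
    using assms by simp
  have "of_int \<lfloor>\<bar>w\<bar> / h\<rfloor> \<le> \<bar>w\<bar> / h" and "\<bar>w\<bar> / h < of_int \<lfloor>\<bar>w\<bar> / h\<rfloor> + 1"
    by linarith+
  then have "h * of_int \<lfloor>\<bar>w\<bar> / h\<rfloor> \<le> h * (\<bar>w\<bar> / h)" and "h * (\<bar>w\<bar> / h) < h * (of_int \<lfloor>\<bar>w\<bar> / h\<rfloor> + 1)"
    using assms by (intro mult_left_mono mult_strict_left_mono; simp)+
  then have "s \<le> \<bar>w\<bar>" and "\<bar>w\<bar> < s + h"
    using assms by (simp_all add: s_def floor_eq algebra_simps)
  moreover have "0 \<le> s"
    using assms by (simp add: s_def)
  moreover have "truncate_to_grid h w = (if w < 0 then - s else s)"
    by (simp add: truncate_to_grid_def s_def)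
  ultimately show "\<bar>truncate_to_grid h w\<bar> \<le> \<bar>w\<bar>" and "\<bar>w - truncate_to_grid h w\<bar> \<le> h"
    by auto
qed

lemma sum_exp_neg_power_le:
  fixes \<eta> :: real
  assumes "\<eta> > 0"
  shows "(\<Sum>k\<le>B. exp (- \<eta>) ^ k) \<le> 1 + 1 / \<eta>"
proof -
  have "(\<Sum>k\<le>B. exp (- \<eta>) ^ k) < 1 / (1 - exp (- \<eta>))"
    using assms by (intro geometric_sum_less) auto
  also have "\<dots> \<le> 1 + 1 / \<eta>"
  proof -
    have "exp (- \<eta>) \<le> 1 / (1 + \<eta>)"
      using exp_ge_add_one_self[of \<eta>] assms by (simp add: exp_minus field_simps)
    then show ?thesis
      using assms by (simp add: field_simps)
  qed
  finally show ?thesis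
    by simp
qed

text \<open>Rankin's trick: every admissible code \<open>c\<close> has weight \<open>\<Prod>i. exp (1 - \<eta> * snd (c i)) \<ge> 1\<close>,
  so their number is at most the total weight, a power of a geometric series.\<close>

lemma card_budgeted_codes_le:
  fixes I :: "'i set"
  assumes "finite I" and "\<eta> > 0"
  shows "real (card {c \<in> I \<rightarrow>\<^sub>E (UNIV :: bool set) \<times> {..B}. (\<Sum>i\<in>I. real (snd (c i))) \<le> card I / \<eta>})
    \<le> (2 * exp 1 * (1 + 1 / \<eta>)) ^ card I"
proof -
  define A where "A = I \<rightarrow>\<^sub>E (UNIV :: bool set) \<times> {..B}"
  define C where "C = {c \<in> A. (\<Sum>i\<in>I. real (snd (c i))) \<le> card I / \<eta>}"
  define weight where "weight c = (\<Prod>i\<in>I. exp (1 - \<eta> * snd (c i)))" for c :: "'i \<Rightarrow> bool \<times> nat"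
  have "finite A"
    using assms(1) by (simp add: A_def finite_PiE)
  have "C \<subseteq> A"
    by (auto simp: C_def)
  have "1 \<le> weight c" if "c \<in> C" for c
  proof -
    have "\<eta> * (\<Sum>i\<in>I. real (snd (c i))) \<le> card I"
      using that assms(2) by (simp add: C_def field_simps)
    then show ?thesis
      by (simp add: weight_def exp_sum[OF assms(1), symmetric] sum_subtractf sum_distrib_left)
  qed
  then have "real (card C) \<le> (\<Sum>c\<in>C. weight c)"
    using sum_mono[of C "\<lambda>_. 1" weight] by simp
  also have "\<dots> \<le> (\<Sum>c\<in>A. weight c)"
    by (intro sum_mono2 \<open>finite A\<close> \<open>C \<subseteq> A\<close>) (simp add: weight_def prod_nonneg)
  also have "\<dots> = (\<Prod>i\<in>I. \<Sum>y\<in>(UNIV :: bool set) \<times> {..B}. exp (1 - \<eta> * snd y))"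
    unfolding A_def weight_def using assms(1) by (rule prod_sum_PiE[symmetric]) auto
  also have "\<dots> = (\<Sum>y\<in>(UNIV :: bool set) \<times> {..B}. exp (1 - \<eta> * snd y)) ^ card I"
    by simp
  also have "(\<Sum>y\<in>(UNIV :: bool set) \<times> {..B}. exp (1 - \<eta> * snd y)) = (\<Sum>b\<in>(UNIV :: bool set). \<Sum>k\<le>B. exp (1 - \<eta> * k))"
    unfolding sum.cartesian_product by (simp add: case_prod_unfold)
  also have "\<dots> = 2 * (\<Sum>k\<le>B. exp (1 - \<eta> * k))"
    by simp
  also have "(\<Sum>k\<le>B. exp (1 - \<eta> * k)) = exp 1 * (\<Sum>k\<le>B. exp (- \<eta>) ^ k)"
    by (simp add: sum_distrib_left exp_diff exp_minus exp_of_nat2_mult[symmetric] field_simps mult.commute)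
  also have "(2 * (exp 1 * (\<Sum>k\<le>B. exp (- \<eta>) ^ k))) ^ card I \<le> (2 * (exp 1 * (1 + 1 / \<eta>))) ^ card I"
    using assms(2) by (intro power_mono mult_left_mono sum_exp_neg_power_le) (auto intro!: sum_nonneg mult_nonneg_nonneg)
  finally show ?thesis
    by (simp add: C_def A_def mult.assoc)
qed

lemma grid_code_mem_budgeted:
  assumes "finite I" and h: "\<And>i. i \<in> I \<Longrightarrow> h i > 0" and budget: "(\<Sum>i\<in>I. \<bar>w i\<bar> / h i) \<le> b"
  shows "(\<lambda>i\<in>I. (w i < 0, nat \<lfloor>\<bar>w i\<bar> / h i\<rfloor>))
    \<in> {c \<in> I \<rightarrow>\<^sub>E (UNIV :: bool set) \<times> {..nat \<lfloor>b\<rfloor>}. (\<Sum>i\<in>I. real (snd (c i))) \<le> b}"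
proof -
  have "real (nat \<lfloor>\<bar>w i\<bar> / h i\<rfloor>) \<le> \<bar>w i\<bar> / h i" if "i \<in> I" for i
    using h[OF that] by simp
  then have "(\<Sum>i\<in>I. real (nat \<lfloor>\<bar>w i\<bar> / h i\<rfloor>)) \<le> (\<Sum>i\<in>I. \<bar>w i\<bar> / h i)"
    by (rule sum_mono)
  with budget have sum_le: "(\<Sum>i\<in>I. real (nat \<lfloor>\<bar>w i\<bar> / h i\<rfloor>)) \<le> b"
    by linarith
  have "nat \<lfloor>\<bar>w i\<bar> / h i\<rfloor> \<le> nat \<lfloor>b\<rfloor>" if "i \<in> I" for i
  proof -
    have "real (nat \<lfloor>\<bar>w i\<bar> / h i\<rfloor>) \<le> b"
      using member_le_sum[of i I "\<lambda>i. real (nat \<lfloor>\<bar>w i\<bar> / h i\<rfloor>)"] sum_le that \<open>finite I\<close> by simp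
    then show ?thesis
      by (metis floor_mono floor_of_nat nat_int nat_mono)
  qed
  then show ?thesis
    using sum_le by auto
qed

lemma card_grid_truncations_le:
  fixes I :: "'i set" and h :: "'i \<Rightarrow> real" and S :: "('i \<Rightarrow> real) set"
  assumes "finite I" and "\<eta> > 0" and h: "\<And>i. i \<in> I \<Longrightarrow> h i > 0"
    and budget: "\<And>w. w \<in> S \<Longrightarrow> (\<Sum>i\<in>I. \<bar>w i\<bar> / h i) \<le> card I / \<eta>"
  shows "finite ((\<lambda>w. \<lambda>i\<in>I. truncate_to_grid (h i) (w i)) ` S)"
    and "real (card ((\<lambda>w. \<lambda>i\<in>I. truncate_to_grid (h i) (w i)) ` S)) \<le> (2 * exp 1 * (1 + 1 / \<eta>)) ^ card I"
proof -
  define C where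
    "C = {c \<in> I \<rightarrow>\<^sub>E (UNIV :: bool set) \<times> {..nat \<lfloor>card I / \<eta>\<rfloor>}. (\<Sum>i\<in>I. real (snd (c i))) \<le> card I / \<eta>}"
  define code where "code w = (\<lambda>i\<in>I. (w i < 0, nat \<lfloor>\<bar>w i\<bar> / h i\<rfloor>))" for w :: "'i \<Rightarrow> real"
  define decode where
    "decode c = (\<lambda>i\<in>I. (if fst (c i) then - 1 else 1) * (h i * real (snd (c i))))" for c :: "'i \<Rightarrow> bool \<times> nat"
  have truncations: "(\<lambda>w. \<lambda>i\<in>I. truncate_to_grid (h i) (w i)) ` S = decode ` code ` S"
    by (auto simp: image_image decode_def code_def truncate_to_grid_def intro!: image_cong)
  have "code w \<in> C" if "w \<in> S" for w
    unfolding code_def C_def by (rule grid_code_mem_budgeted[OF \<open>finite I\<close> h budget[OF that]])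
  then have "code ` S \<subseteq> C"
    by blast
  moreover have "finite C"
    using \<open>finite I\<close> by (intro finite_subset[OF _ finite_PiE[of I "\<lambda>_. UNIV \<times> {..nat \<lfloor>card I / \<eta>\<rfloor>}"]])
      (auto simp: C_def)
  ultimately have "finite (code ` S)" and "card (decode ` code ` S) \<le> card C"
    by (simp_all add: finite_subset order_trans[OF card_image_le card_mono])
  then show "finite ((\<lambda>w. \<lambda>i\<in>I. truncate_to_grid (h i) (w i)) ` S)"
    unfolding truncations by simp
  have "real (card (decode ` code ` S)) \<le> real (card C)"
    using \<open>card (decode ` code ` S) \<le> card C\<close> by simp
  also have "\<dots> \<le> (2 * exp 1 * (1 + 1 / \<eta>)) ^ card I"
    unfolding C_def by (rule card_budgeted_codes_le[OF \<open>finite I\<close> \<open>\<eta> > 0\<close>])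
  finally show "real (card ((\<lambda>w. \<lambda>i\<in>I. truncate_to_grid (h i) (w i)) ` S)) \<le> (2 * exp 1 * (1 + 1 / \<eta>)) ^ card I"
    unfolding truncations .
qed

lemma sum_abs_div_grid_le:
  assumes "finite A" and "L2_set w A \<le> 1" and "\<eta> > 0"
  shows "(\<Sum>p\<in>A. \<bar>w p\<bar> / (\<eta> / sqrt (card A))) \<le> card A / \<eta>"
proof -
  have "(\<Sum>p\<in>A. \<bar>w p\<bar> * \<bar>1\<bar>) \<le> L2_set w A * L2_set (\<lambda>_. 1) A"
    by (rule L2_set_mult_ineq)
  also have "\<dots> \<le> sqrt (card A)"
    using assms(2) by (simp add: L2_set_constant mult_left_le_one_le)
  finally have "(\<Sum>p\<in>A. \<bar>w p\<bar>) * (sqrt (card A) / \<eta>) \<le> sqrt (card A) * (sqrt (card A) / \<eta>)"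
    using assms(3) by (intro mult_right_mono) simp_all
  then show ?thesis
    by (simp add: sum_divide_distrib[symmetric] sum_distrib_right[symmetric] field_simps)
qed

section \<open>Truncating the parameters of a maxout network\<close>

text \<open>\<open>Inl ((l, i, j), p)\<close> indexes component \<open>p\<close> of the weight vector of piece \<open>j\<close> of neuron
  \<open>i\<close> in layer \<open>l\<close> (the bias for \<open>p = M l\<close>), and \<open>Inr i\<close> the output weight \<open>a i\<close>.\<close>

definition maxout_coords :: "nat \<Rightarrow> (nat \<Rightarrow> nat) \<Rightarrow> nat \<Rightarrow> ((nat \<times> nat \<times> nat) \<times> nat + nat) set" where
  "maxout_coords L M k =
     (SIGMA g:(SIGMA l:{1..L-1}. {..<M (Suc l)} \<times> {..<k}). {..M (fst g)}) <+> {..<M L}"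

lemma finite_maxout_coords: "finite (maxout_coords L M k)"
  by (simp add: maxout_coords_def)

lemma mem_maxout_coords:
  "Inl ((l, i, j), p) \<in> maxout_coords L M k \<longleftrightarrow> l \<in> {1..L-1} \<and> i < M (Suc l) \<and> j < k \<and> p \<le> M l"
  "Inr i \<in> maxout_coords L M k \<longleftrightarrow> i < M L"
  by (auto simp: maxout_coords_def)

lemma card_maxout_coords_le:
  assumes "L \<ge> 1" and "\<forall>l \<in> {1..L}. M l \<le> m"
  shows "card (maxout_coords L M k) \<le> (L - 1) * k * m * (m + 1) + m"
proof -
  define G where "G = (SIGMA l:{1..L-1}. {..<M (Suc l)} \<times> {..<k})"
  have "card G = (\<Sum>l\<in>{1..L-1}. M (Suc l) * k)"
    by (simp add: G_def card_cartesian_product)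
  also have "\<dots> \<le> (\<Sum>l\<in>{1..L-1}. m * k)"
    using assms by (intro sum_mono) auto
  finally have "card G \<le> (L - 1) * k * m"
    by (simp add: mult_ac)
  have "card (maxout_coords L M k) = (\<Sum>g\<in>G. M (fst g) + 1) + M L"
    by (simp add: maxout_coords_def G_def card_Plus)
  also have "\<dots> \<le> (\<Sum>g\<in>G. m + 1) + m"
    using assms by (intro add_mono sum_mono) (auto simp: G_def)
  also have "\<dots> \<le> (L - 1) * k * m * (m + 1) + m"
    using mult_right_mono[OF \<open>card G \<le> (L - 1) * k * m\<close>, of "m + 1"] by simp
  finally show ?thesis .
qed

definition maxout_truncate :: "nat \<Rightarrow> (nat \<Rightarrow> nat) \<Rightarrow> nat \<Rightarrow> real
    \<Rightarrow> (nat \<Rightarrow> nat \<Rightarrow> nat \<Rightarrow> nat \<Rightarrow> real) \<times> (nat \<Rightarrow> real)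
    \<Rightarrow> (nat \<Rightarrow> nat \<Rightarrow> nat \<Rightarrow> nat \<Rightarrow> real) \<times> (nat \<Rightarrow> real)" where
  "maxout_truncate L M k \<eta> q =
     (\<lambda>l i j p. if l \<in> {1..L-1} \<and> i < M (Suc l) \<and> j < k \<and> p \<le> M l
        then truncate_to_grid (\<eta> / sqrt (M l + 1)) (fst q l i j p) else 0,
      \<lambda>i. if i < M L then truncate_to_grid (\<eta> / sqrt (M L)) (snd q i) else 0)"

lemma maxout_truncate_mem_params:
  assumes "\<eta> > 0" and "q \<in> maxout_params L M k"
  shows "maxout_truncate L M k \<eta> q \<in> maxout_params L M k"
proof -
  have "L2_set (fst (maxout_truncate L M k \<eta> q) l i j) {..M l} \<le> L2_set (fst q l i j) {..M l}"
    if "l \<in> {1..L-1}" "i < M (Suc l)" "j < k" for l i j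
    using that \<open>\<eta> > 0\<close> by (intro L2_set_le_of_abs_le) (simp add: maxout_truncate_def abs_truncate_to_grid_le)
  moreover have "L2_set (snd (maxout_truncate L M k \<eta> q)) {..<M L} \<le> L2_set (snd q) {..<M L}"
    using \<open>\<eta> > 0\<close> by (intro L2_set_le_of_abs_le) (simp add: maxout_truncate_def abs_truncate_to_grid_le)
  moreover have "maxout_unit_weights L M k (fst q)" and "L2_set (snd q) {..<M L} \<le> 1"
    using assms(2) by (auto simp: maxout_params_def)
  ultimately have "maxout_unit_weights L M k (fst (maxout_truncate L M k \<eta> q))"
    and "L2_set (snd (maxout_truncate L M k \<eta> q)) {..<M L} \<le> 1"
    unfolding maxout_unit_weights_def by (fastforce intro: order_trans)+
  then show ?thesis
    by (cases "maxout_truncate L M k \<eta> q") (simp add: maxout_params_def)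
qed

lemma maxout_truncate_close:
  assumes "\<eta> > 0"
  shows "\<And>l i j. l \<in> {1..L-1} \<Longrightarrow> i < M (Suc l) \<Longrightarrow> j < k \<Longrightarrow>
      L2_set (\<lambda>p. fst q l i j p - fst (maxout_truncate L M k \<eta> q) l i j p) {..M l} \<le> \<eta>"
    and "L2_set (\<lambda>i. snd q i - snd (maxout_truncate L M k \<eta> q) i) {..<M L} \<le> \<eta>"
proof -
  fix l i j assume "l \<in> {1..L-1}" "i < M (Suc l)" "j < k"
  then have "L2_set (\<lambda>p. fst q l i j p - fst (maxout_truncate L M k \<eta> q) l i j p) {..M l}
      \<le> L2_set (\<lambda>_. \<eta> / sqrt (M l + 1)) {..M l}"
    using \<open>\<eta> > 0\<close> by (intro L2_set_le_of_abs_le) (simp add: maxout_truncate_def abs_diff_truncate_to_grid_le)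
  then show "L2_set (\<lambda>p. fst q l i j p - fst (maxout_truncate L M k \<eta> q) l i j p) {..M l} \<le> \<eta>"
    using \<open>\<eta> > 0\<close> by (simp add: L2_set_constant add.commute)
next
  have "L2_set (\<lambda>i. snd q i - snd (maxout_truncate L M k \<eta> q) i) {..<M L} \<le> L2_set (\<lambda>_. \<eta> / sqrt (M L)) {..<M L}"
    using \<open>\<eta> > 0\<close> by (intro L2_set_le_of_abs_le) (simp add: maxout_truncate_def abs_diff_truncate_to_grid_le)
  then show "L2_set (\<lambda>i. snd q i - snd (maxout_truncate L M k \<eta> q) i) {..<M L} \<le> \<eta>"
    using \<open>\<eta> > 0\<close> by (cases "M L = 0") (simp_all add: L2_set_constant)
qed

lemma maxout_net_truncate_diff_le:
  assumes "L \<ge> 2" and "k \<ge> 1" and "\<eta> > 0" and q: "q \<in> maxout_params L M k"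
    and x: "L2_set x {..<M 1} \<le> 1"
  shows "\<bar>maxout_net L M k (fst q) (snd q) x
      - maxout_net L M k (fst (maxout_truncate L M k \<eta> q)) (snd (maxout_truncate L M k \<eta> q)) x\<bar>
    \<le> \<eta> * L * sqrt L"
proof -
  have q': "maxout_truncate L M k \<eta> q \<in> maxout_params L M k"
    using maxout_truncate_mem_params[OF \<open>\<eta> > 0\<close> q] .
  have "\<bar>maxout_net L M k (fst q) (snd q) x
      - maxout_net L M k (fst (maxout_truncate L M k \<eta> q)) (snd (maxout_truncate L M k \<eta> q)) x\<bar>
    \<le> L2_set (\<lambda>i. snd q i - snd (maxout_truncate L M k \<eta> q) i) {..<M L} * sqrt L
      + (real L - 1) * \<eta> * sqrt L + L2_set (\<lambda>p. x p - x p) {..<M 1}"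
    using q q' \<open>\<eta> > 0\<close>
    by (intro maxout_net_diff_le \<open>L \<ge> 2\<close> \<open>k \<ge> 1\<close> x maxout_truncate_close) (auto simp: maxout_params_def)
  also have "\<dots> \<le> \<eta> * sqrt L + (real L - 1) * \<eta> * sqrt L"
    using maxout_truncate_close(2)[OF \<open>\<eta> > 0\<close>] by (simp add: L2_set_constant mult_right_mono)
  also have "\<dots> = \<eta> * L * sqrt L"
    by (simp add: algebra_simps)
  finally show ?thesis .
qed

definition maxout_coord :: "(nat \<Rightarrow> nat \<Rightarrow> nat \<Rightarrow> nat \<Rightarrow> real) \<times> (nat \<Rightarrow> real)
    \<Rightarrow> (nat \<times> nat \<times> nat) \<times> nat + nat \<Rightarrow> real" where
  "maxout_coord q t = (case t of Inl ((l, i, j), p) \<Rightarrow> fst q l i j p | Inr i \<Rightarrow> snd q i)"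

definition maxout_grid :: "nat \<Rightarrow> (nat \<Rightarrow> nat) \<Rightarrow> real \<Rightarrow> (nat \<times> nat \<times> nat) \<times> nat + nat \<Rightarrow> real" where
  "maxout_grid L M \<eta> t = (case t of Inl ((l, _), _) \<Rightarrow> \<eta> / sqrt (M l + 1) | Inr _ \<Rightarrow> \<eta> / sqrt (M L))"

lemma maxout_grid_budget:
  assumes "\<eta> > 0" and "q \<in> maxout_params L M k"
  shows "(\<Sum>t\<in>maxout_coords L M k. \<bar>maxout_coord q t\<bar> / maxout_grid L M \<eta> t) \<le> card (maxout_coords L M k) / \<eta>"
proof -
  define G where "G = (SIGMA l:{1..L-1}. {..<M (Suc l)} \<times> {..<k})"
  have "(\<Sum>p\<le>M (fst g). \<bar>maxout_coord q (Inl (g, p))\<bar> / maxout_grid L M \<eta> (Inl (g, p))) \<le> card {..M (fst g)} / \<eta>"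
    if "g \<in> G" for g
  proof -
    obtain l i j where g: "g = (l, i, j)"
      by (cases g) auto
    have "L2_set (fst q l i j) {..M l} \<le> 1"
      using assms(2) that by (auto simp: g G_def maxout_params_def maxout_unit_weights_def)
    then show ?thesis
      using sum_abs_div_grid_le[of "{..M l}" "fst q l i j" \<eta>] \<open>\<eta> > 0\<close>
      by (simp add: g maxout_coord_def maxout_grid_def add.commute)
  qed
  moreover have "(\<Sum>x\<in>(SIGMA g:G. {..M (fst g)}). F x) = (\<Sum>g\<in>G. \<Sum>p\<le>M (fst g). F (g, p))"
    for F :: "(nat \<times> nat \<times> nat) \<times> nat \<Rightarrow> real"
    using sum.Sigma[of G "\<lambda>g. {..M (fst g)}" "\<lambda>g p. F (g, p)"] by (simp add: G_def)
  ultimately have weights: "(\<Sum>x\<in>(SIGMA g:G. {..M (fst g)}). \<bar>maxout_coord q (Inl x)\<bar> / maxout_grid L M \<eta> (Inl x))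
      \<le> (\<Sum>g\<in>G. card {..M (fst g)} / \<eta>)"
    by (simp add: sum_mono)
  have "L2_set (snd q) {..<M L} \<le> 1"
    using assms(2) by (auto simp: maxout_params_def)
  then have outputs: "(\<Sum>i<M L. \<bar>maxout_coord q (Inr i)\<bar> / maxout_grid L M \<eta> (Inr i)) \<le> card {..<M L} / \<eta>"
    using sum_abs_div_grid_le[of "{..<M L}" "snd q" \<eta>] \<open>\<eta> > 0\<close> by (simp add: maxout_coord_def maxout_grid_def)
  have "card (maxout_coords L M k) = (\<Sum>g\<in>G. card {..M (fst g)}) + card {..<M L}"
    by (simp add: maxout_coords_def G_def card_Plus)
  then show ?thesis
    using add_mono[OF weights outputs]
    by (simp add: maxout_coords_def G_def sum.Plus add_divide_distrib sum_divide_distrib)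
qed

lemma card_maxout_truncate_le:
  assumes "\<eta> > 0"
  shows "finite (maxout_truncate L M k \<eta> ` maxout_params L M k)"
    and "real (card (maxout_truncate L M k \<eta> ` maxout_params L M k))
      \<le> (2 * exp 1 * (1 + 1 / \<eta>)) ^ card (maxout_coords L M k)"
proof -
  define I where "I = maxout_coords L M k"
  define truncations where
    "truncations = (\<lambda>w. \<lambda>t\<in>I. truncate_to_grid (maxout_grid L M \<eta> t) (w t)) ` maxout_coord ` maxout_params L M k"
  define unflatten where "unflatten v =
    (\<lambda>l i j p. if Inl ((l, i, j), p) \<in> I then v (Inl ((l, i, j), p)) else 0,
     \<lambda>i. if Inr i \<in> I then v (Inr i) else 0)" for v :: "(nat \<times> nat \<times> nat) \<times> nat + nat \<Rightarrow> real"
  have "maxout_truncate L M k \<eta> q = unflatten (\<lambda>t\<in>I. truncate_to_grid (maxout_grid L M \<eta> t) (maxout_coord q t))"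
    for q
    by (simp add: maxout_truncate_def unflatten_def I_def mem_maxout_coords maxout_coord_def
        maxout_grid_def add.commute fun_eq_iff)
  then have image_eq: "maxout_truncate L M k \<eta> ` maxout_params L M k = unflatten ` truncations"
    by (simp add: truncations_def image_image)
  have "maxout_grid L M \<eta> t > 0" if "t \<in> I" for t
    using that \<open>\<eta> > 0\<close> by (auto simp: I_def maxout_coords_def maxout_grid_def)
  moreover have "(\<Sum>t\<in>I. \<bar>w t\<bar> / maxout_grid L M \<eta> t) \<le> card I / \<eta>"
    if "w \<in> maxout_coord ` maxout_params L M k" for w
    using that maxout_grid_budget[OF \<open>\<eta> > 0\<close>] by (auto simp: I_def)
  ultimately have "finite truncations" and "real (card truncations) \<le> (2 * exp 1 * (1 + 1 / \<eta>)) ^ card I"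
    unfolding truncations_def
    using card_grid_truncations_le[of I \<eta> "maxout_grid L M \<eta>" "maxout_coord ` maxout_params L M k"]
      finite_maxout_coords \<open>\<eta> > 0\<close> by (simp_all add: I_def)
  then show "finite (maxout_truncate L M k \<eta> ` maxout_params L M k)"
    and "real (card (maxout_truncate L M k \<eta> ` maxout_params L M k))
      \<le> (2 * exp 1 * (1 + 1 / \<eta>)) ^ card (maxout_coords L M k)"
    unfolding image_eq I_def[symmetric]
    by (simp_all add: order_trans[OF of_nat_mono[OF card_image_le]])
qed

section \<open>Chaining the maxout class\<close>

lemma one_le_grid_factor: "1 \<le> 2 * exp 1 * (1 + 2 ^ j * real L * sqrt L)"
proof -
  have "1 * 1 \<le> (2 * exp 1) * (1 + 2 ^ j * real L * sqrt L)"
    using exp_ge_add_one_self[of 1] by (intro mult_mono) auto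
  then show ?thesis
    by simp
qed

definition covering_bound :: "nat \<Rightarrow> nat \<Rightarrow> nat \<Rightarrow> real" where
  "covering_bound L E j = (2 * exp 1 * (1 + 2 ^ (j + 1) * real L * sqrt L)) ^ E"

text \<open>Centering at the origin makes the class bounded by 1 on the unit ball, as the coarsest level of
  chaining requires; the discarded offset is bounded by \<open>sqrt L\<close>.\<close>

definition maxout_centered :: "nat \<Rightarrow> (nat \<Rightarrow> nat) \<Rightarrow> nat
    \<Rightarrow> (nat \<Rightarrow> nat \<Rightarrow> nat \<Rightarrow> nat \<Rightarrow> real) \<times> (nat \<Rightarrow> real) \<Rightarrow> (nat \<Rightarrow> real) \<Rightarrow> real" where
  "maxout_centered L M k q x =
     maxout_net L M k (fst q) (snd q) x - maxout_net L M k (fst q) (snd q) (\<lambda>_. 0)"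

text \<open>The mesh \<open>1 / (2 ^ (j + 1) * L * sqrt L)\<close> is chosen so that, by
  \<open>maxout_net_truncate_diff_le\<close>, level \<open>j\<close> approximates the centered networks within \<open>2 ^ - j\<close>.\<close>

definition maxout_approx :: "nat \<Rightarrow> (nat \<Rightarrow> nat) \<Rightarrow> nat \<Rightarrow> nat
    \<Rightarrow> (nat \<Rightarrow> nat \<Rightarrow> nat \<Rightarrow> nat \<Rightarrow> real) \<times> (nat \<Rightarrow> real)
    \<Rightarrow> (nat \<Rightarrow> nat \<Rightarrow> nat \<Rightarrow> nat \<Rightarrow> real) \<times> (nat \<Rightarrow> real)" where
  "maxout_approx L M k j q =
     (if j = 0 then (\<lambda>_ _ _ _. 0, \<lambda>_. 0) else maxout_truncate L M k (1 / (2 ^ (j + 1) * real L * sqrt L)) q)"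

lemma abs_maxout_centered_le:
  assumes "L \<ge> 2" and "k \<ge> 1" and "q \<in> maxout_params L M k" and "L2_set x {..<M 1} \<le> 1"
  shows "\<bar>maxout_centered L M k q x\<bar> \<le> 1"
  using abs_maxout_net_input_diff_le[OF assms, where x' = "\<lambda>_. 0"] assms(4)
  by (simp add: maxout_centered_def)

lemma maxout_centered_approx_zero: "L \<ge> 2 \<Longrightarrow> maxout_centered L M k (maxout_approx L M k 0 q) x = 0"
  by (simp add: maxout_centered_def maxout_approx_def maxout_net_zero_output_weights)

lemma maxout_centered_approx_le:
  assumes "L \<ge> 2" and "k \<ge> 1" and q: "q \<in> maxout_params L M k" and x: "L2_set x {..<M 1} \<le> 1"
  shows "\<bar>maxout_centered L M k q x - maxout_centered L M k (maxout_approx L M k j q) x\<bar> \<le> (1 / 2) ^ j"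
proof (cases "j = 0")
  case True
  then show ?thesis
    using abs_maxout_centered_le[OF assms] maxout_centered_approx_zero[OF assms(1)] by simp
next
  case False
  define \<eta> where "\<eta> = 1 / (2 ^ (j + 1) * real L * sqrt L)"
  have "\<eta> > 0" and "2 * (\<eta> * L * sqrt L) = (1 / 2) ^ j"
    using assms(1) by (simp_all add: \<eta>_def field_simps)
  moreover have "maxout_approx L M k j q = maxout_truncate L M k \<eta> q"
    using False by (simp add: maxout_approx_def \<eta>_def)
  ultimately show ?thesis
    using maxout_net_truncate_diff_le[OF assms(1,2) \<open>\<eta> > 0\<close> q x]
      maxout_net_truncate_diff_le[OF assms(1,2) \<open>\<eta> > 0\<close> q, of "\<lambda>_. 0"]
    unfolding maxout_centered_def by (simp add: L2_set_constant)
qed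

lemma card_maxout_approx_le:
  assumes "L > 0"
  shows "finite (maxout_approx L M k j ` maxout_params L M k)
    \<and> real (card (maxout_approx L M k j ` maxout_params L M k)) \<le> covering_bound L (card (maxout_coords L M k)) j"
proof (cases "j = 0")
  case True
  then have "maxout_approx L M k j ` maxout_params L M k = {(\<lambda>_ _ _ _. 0, \<lambda>_. 0)}"
    using maxout_zero_mem_params by (auto simp: maxout_approx_def)
  then show ?thesis
    using one_le_grid_factor[of "j + 1" L] by (simp add: covering_bound_def one_le_power)
next
  case False
  define \<eta> where "\<eta> = 1 / (2 ^ (j + 1) * real L * sqrt L)"
  have "maxout_approx L M k j ` maxout_params L M k = maxout_truncate L M k \<eta> ` maxout_params L M k"
    using False by (simp add: maxout_approx_def \<eta>_def)
  moreover have "\<eta> > 0" and "1 / \<eta> = 2 ^ (j + 1) * real L * sqrt L"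
    using assms by (simp_all add: \<eta>_def)
  ultimately show ?thesis
    using card_maxout_truncate_le[of \<eta> L M k] by (simp add: covering_bound_def)
qed

definition maxout_chaining_sum :: "nat \<Rightarrow> nat \<Rightarrow> nat \<Rightarrow> real" where
  "maxout_chaining_sum L E n = sqrt L * sqrt (2 * ln 2) + sqrt n * (1 / 2) ^ n
     + (\<Sum>j<n. 3 * (1 / 2) ^ (j + 1) * sqrt (2 * ln (2 * (covering_bound L E (Suc j) * covering_bound L E j))))"

lemma rademacher_maxout_le:
  assumes "L \<ge> 2" and "k \<ge> 1" and "n \<ge> 1" and X: "\<And>t. t < n \<Longrightarrow> L2_set (X t) {..<M 1} \<le> 1"
  shows "rademacher_emp n X (maxout_class L M k) \<le> maxout_chaining_sum L (card (maxout_coords L M k)) n / sqrt n"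
proof -
  define P where "P = maxout_params L M k"
  define K where "K = covering_bound L (card (maxout_coords L M k))"
  define S where "S = (\<Sum>j<n. 3 * (1 / 2) ^ (j + 1) * sqrt (2 * ln (2 * (K (Suc j) * K j))))"
  have "P \<noteq> {}"
    using maxout_zero_mem_params by (auto simp: P_def)
  have class_eq: "maxout_class L M k
      = (\<lambda>q x. maxout_net L M k (fst q) (snd q) (\<lambda>_. 0) + maxout_centered L M k q x) ` P"
    by (simp add: maxout_class_eq_image P_def maxout_centered_def)
  have "rademacher_emp n X (maxout_class L M k)
      \<le> (sqrt L * ((\<Sum>e\<in>sign_vectors n. \<bar>\<Sum>t<n. e t\<bar>) / 2 ^ n)
         + (\<Sum>e\<in>sign_vectors n. SUP q\<in>P. \<bar>\<Sum>t<n. e t * maxout_centered L M k q (X t)\<bar>) / 2 ^ n) / n"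
    unfolding class_eq
    using abs_maxout_net_le[OF assms(1,2), where M = M] abs_maxout_centered_le[OF assms(1,2), where M = M] X
    by (intro rademacher_emp_shift_le[where C = "sqrt L" and B = 1] \<open>P \<noteq> {}\<close> \<open>n \<ge> 1\<close>)
      (auto simp: P_def L2_set_constant)
  also have "\<dots> \<le> (sqrt L * (sqrt n * sqrt (2 * ln 2)) + (n * (1 / 2) ^ n + sqrt n * S)) / n"
  proof -
    have "(\<Sum>e\<in>sign_vectors n. SUP q\<in>P. \<bar>\<Sum>t<n. e t * maxout_centered L M k q (X t)\<bar>) / 2 ^ n
        \<le> n * (1 / 2) ^ n + sqrt n * S"
      unfolding S_def K_def P_def
    proof (rule chaining_bound[where f = "maxout_centered L M k" and X = X and \<pi> = "maxout_approx L M k"])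
      show "maxout_params L M k \<noteq> {}"
        using \<open>P \<noteq> {}\<close> by (simp add: P_def)
      show "maxout_centered L M k (maxout_approx L M k 0 q) x = 0" for q x
        by (rule maxout_centered_approx_zero[OF assms(1)])
      show "\<bar>maxout_centered L M k q (X t) - maxout_centered L M k (maxout_approx L M k j q) (X t)\<bar> \<le> (1 / 2) ^ j"
        if "q \<in> maxout_params L M k" and "t < n" for j q t
        using maxout_centered_approx_le[OF assms(1,2) that(1) X[OF that(2)]] .
      show "finite (maxout_approx L M k j ` maxout_params L M k)"
        and "real (card (maxout_approx L M k j ` maxout_params L M k)) \<le> covering_bound L (card (maxout_coords L M k)) j"
        for j
        using card_maxout_approx_le[of L M k j] assms(1) by simp_all
    qed
    then show ?thesis
      using sum_sign_vectors_abs_sum_le[of n] by (intro divide_right_mono add_mono mult_left_mono) simp_all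
  qed
  also have "\<dots> = (sqrt L * sqrt (2 * ln 2) + sqrt n * (1 / 2) ^ n + S) / sqrt n"
  proof -
    define r where "r = sqrt n"
    have "r > 0" and n_eq: "real n = r * r"
      using \<open>n \<ge> 1\<close> by (simp_all add: r_def)
    then show ?thesis
      unfolding r_def[symmetric] n_eq by (simp add: field_simps)
  qed
  finally show ?thesis
    by (simp add: maxout_chaining_sum_def S_def K_def)
qed

section \<open>Evaluating the chaining sum\<close>

lemma ln_grid_factor_le:
  assumes "L \<ge> 2"
  shows "ln (2 * exp 1 * (1 + 2 ^ (j + 2) * real L * sqrt L))
    \<le> j + 2 * (real (L + 1) * ln 2 + 1 / 2 * ln (real L ^ 2 + 1))"
proof -
  have "sqrt L \<le> L"
    using assms by (intro real_le_lsqrt) (simp_all add: power2_eq_square)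
  then have "2 ^ (j + 2) * real L * sqrt L \<le> 2 ^ (j + 2) * (real L)\<^sup>2"
    by (simp add: power2_eq_square mult_left_mono)
  moreover have "1 * 1 \<le> 2 ^ (j + 2) * (real L)\<^sup>2"
    using assms by (intro mult_mono one_le_power) auto
  ultimately have "1 + 2 ^ (j + 2) * real L * sqrt L \<le> 2 * (2 ^ (j + 2) * (real L)\<^sup>2)"
    by linarith
  also have "\<dots> = 2 ^ (j + 3) * (real L)\<^sup>2"
    by (simp add: power_add)
  finally have "1 + 2 ^ (j + 2) * real L * sqrt L \<le> 2 ^ (j + 3) * (real L)\<^sup>2" .
  then have "ln (2 * exp 1 * (1 + 2 ^ (j + 2) * real L * sqrt L)) \<le> ln (2 * exp 1 * (2 ^ (j + 3) * (real L)\<^sup>2))"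
    using assms by (intro ln_mono) (simp_all add: add_pos_nonneg)
  also have "\<dots> = 1 + (j + 4) * ln 2 + ln ((real L)\<^sup>2)"
    using assms by (simp add: ln_mult ln_realpow algebra_simps)
  also have "\<dots> \<le> j + 2 * (real (L + 1) * ln 2 + 1 / 2 * ln (real L ^ 2 + 1))"
  proof -
    have "j * ln 2 \<le> j"
      using ln_2_less_1 by (simp add: mult_left_le)
    have "1 + 4 * ln 2 \<le> 6 * ln (2 :: real)"
      using ln2_ge_two_thirds by simp
    also have "\<dots> \<le> 2 * (L + 1) * ln 2"
      using assms by (intro mult_right_mono) auto
    finally have "1 + 4 * ln 2 \<le> 2 * (L + 1) * ln (2 :: real)" .
    moreover have "ln ((real L)\<^sup>2) \<le> ln (real L ^ 2 + 1)"
      using assms by (intro ln_mono) auto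
    ultimately show ?thesis
      using \<open>j * ln 2 \<le> j\<close> by (simp add: algebra_simps)
  qed
  finally show ?thesis .
qed

lemma sum_Suc_mult_half_power_le: "(\<Sum>j<n. (real j + 1) * (1 / 2) ^ (j + 1)) \<le> 2"
proof -
  have "(\<Sum>j<n. (real j + 1) * (1 / 2) ^ (j + 1)) = 2 - (real n + 2) * (1 / 2) ^ n"
    by (induction n) (simp_all add: field_simps)
  then show ?thesis
    by simp
qed

lemma maxout_size_ge:
  fixes L k m :: nat
  assumes "L \<ge> 2" and "k \<ge> 1" and "m \<ge> 1"
  shows "L \<le> (L - 1) * k * m * (m + 1)" and "m \<le> (L - 1) * k * m * (m + 1)"
proof -
  have "1 * 2 \<le> k * m * (m + 1)"
    using assms(2,3) by (intro mult_le_mono) (simp_all add: Suc_le_eq)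
  then have "(L - 1) * 2 \<le> (L - 1) * (k * m * (m + 1))"
    by (intro mult_le_mono2) simp
  moreover have "L \<le> (L - 1) * 2"
    using assms(1) by simp
  ultimately show "L \<le> (L - 1) * k * m * (m + 1)"
    by (metis le_trans mult.assoc)
  have "1 \<le> (L - 1) * k * (m + 1)"
    using assms by (simp add: Suc_le_eq)
  then have "1 * m \<le> (L - 1) * k * (m + 1) * m"
    by (rule mult_right_mono) simp
  then show "m \<le> (L - 1) * k * m * (m + 1)"
    by (simp add: mult_ac)
qed

lemma one_le_log_term: "L \<ge> 2 \<Longrightarrow> 1 \<le> real (L + 1) * ln 2 + 1 / 2 * ln (real L ^ 2 + 1)"
proof -
  assume "L \<ge> 2"
  then have "3 * ln 2 \<le> real (L + 1) * ln (2 :: real)"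
    by (intro mult_right_mono) auto
  moreover have "0 \<le> ln (real L ^ 2 + 1)"
    by simp
  ultimately show ?thesis
    using ln2_ge_two_thirds by linarith
qed

lemma ln_covering_bound_le:
  assumes "L \<ge> 2"
  shows "ln (2 * (covering_bound L E (Suc j) * covering_bound L E j))
    \<le> ln 2 + 2 * real E * (j + 2 * (real (L + 1) * ln 2 + 1 / 2 * ln (real L ^ 2 + 1)))"
proof -
  define c where "c = 2 * exp 1 * (1 + 2 ^ (j + 2) * real L * sqrt L)"
  have "1 \<le> c"
    using one_le_grid_factor[of "j + 2" L] by (simp add: c_def)
  have "covering_bound L E j \<le> covering_bound L E (Suc j)"
    unfolding covering_bound_def by (intro power_mono mult_left_mono add_left_mono) auto
  moreover have "covering_bound L E (Suc j) = c ^ E"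
    by (simp add: covering_bound_def c_def)
  moreover have "0 < covering_bound L E j"
    unfolding covering_bound_def by (intro zero_less_power mult_pos_pos add_pos_nonneg) simp_all
  ultimately have "ln (2 * (covering_bound L E (Suc j) * covering_bound L E j)) \<le> ln (2 * c ^ E * c ^ E)"
    by (intro ln_mono) (simp_all add: mult_left_mono)
  also have "\<dots> = ln 2 + 2 * real E * ln c"
    using \<open>1 \<le> c\<close> by (simp add: ln_mult ln_realpow)
  also have "\<dots> \<le> ln 2 + 2 * real E * (j + 2 * (real (L + 1) * ln 2 + 1 / 2 * ln (real L ^ 2 + 1)))"
    using ln_grid_factor_le[OF assms, of j] by (intro add_left_mono mult_left_mono) (simp_all add: c_def)
  finally show ?thesis .
qed

lemma sqrt_ln_covering_bound_le:
  assumes "L \<ge> 2" and "real E \<le> 2 * D" and "1 \<le> D"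
  defines "A \<equiv> real (L + 1) * ln 2 + 1 / 2 * ln (real L ^ 2 + 1)"
  shows "sqrt (2 * ln (2 * (covering_bound L E (Suc j) * covering_bound L E j)))
    \<le> sqrt (18 * (D * A)) * (real j + 1)"
proof -
  have "1 \<le> A"
    using one_le_log_term[OF assms(1)] by (simp add: A_def)
  then have "1 \<le> D * A"
    using \<open>1 \<le> D\<close> by (metis mult_mono' mult_1 zero_le_one)
  have "ln (2 * (covering_bound L E (Suc j) * covering_bound L E j)) \<le> ln 2 + 2 * real E * (j + 2 * A)"
    using ln_covering_bound_le[OF assms(1)] by (simp add: A_def)
  also have "\<dots> \<le> 1 + 2 * (2 * D) * (j + 2 * A)"
    using ln_2_less_1 assms(2) \<open>1 \<le> A\<close> by (intro add_mono mult_right_mono) simp_all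
  also have "\<dots> = 1 + 4 * (D * j) + 8 * (D * A)"
    by (simp add: algebra_simps)
  also have "\<dots> \<le> D * A + 4 * (D * A * j) + 8 * (D * A)"
  proof -
    have "D * j * 1 \<le> D * j * A"
      using \<open>1 \<le> A\<close> \<open>1 \<le> D\<close> by (intro mult_left_mono) simp_all
    then show ?thesis
      using \<open>1 \<le> D * A\<close> by (simp add: mult_ac)
  qed
  also have "\<dots> \<le> 9 * (D * A) * (real j + 1)\<^sup>2"
    using \<open>1 \<le> D * A\<close> mult_left_mono[of "9 + 4 * real j" "9 * (real j + 1)\<^sup>2" "D * A"]
    by (simp add: power2_eq_square algebra_simps)
  finally have "2 * ln (2 * (covering_bound L E (Suc j) * covering_bound L E j)) \<le> 18 * (D * A) * (real j + 1)\<^sup>2"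
    by linarith
  then have "sqrt (2 * ln (2 * (covering_bound L E (Suc j) * covering_bound L E j)))
      \<le> sqrt (18 * (D * A) * (real j + 1)\<^sup>2)"
    by (rule real_sqrt_le_mono)
  then show ?thesis
    by (simp add: real_sqrt_mult)
qed

lemma sqrt_mult_half_power_le_one: "sqrt n * (1 / 2) ^ n \<le> 1"
proof -
  have "real n \<le> real (2 ^ n)"
    by (simp only: of_nat_le_iff) (rule less_imp_le[OF less_exp])
  also have "\<dots> = 2 ^ n * 1"
    by simp
  also have "\<dots> \<le> (2 ^ n)\<^sup>2"
    unfolding power2_eq_square by (intro mult_left_mono one_le_power) simp_all
  finally have "sqrt n \<le> 2 ^ n"
    by (intro real_le_lsqrt) simp_all
  then show ?thesis
    by (simp add: field_simps)
qed

lemma sum_chaining_levels_le: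
  assumes "L \<ge> 2" and "real E \<le> 2 * D" and "1 \<le> D"
  defines "A \<equiv> real (L + 1) * ln 2 + 1 / 2 * ln (real L ^ 2 + 1)"
  shows "(\<Sum>j<n. 3 * (1 / 2) ^ (j + 1) * sqrt (2 * ln (2 * (covering_bound L E (Suc j) * covering_bound L E j))))
    \<le> 30 * sqrt (D * A)"
proof -
  have "1 \<le> D * A"
    using \<open>1 \<le> D\<close> one_le_log_term[OF assms(1)] unfolding A_def by (metis mult_mono' mult_1 zero_le_one)
  have "(\<Sum>j<n. 3 * (1 / 2) ^ (j + 1) * sqrt (2 * ln (2 * (covering_bound L E (Suc j) * covering_bound L E j))))
      \<le> (\<Sum>j<n. 3 * sqrt (18 * (D * A)) * ((real j + 1) * (1 / 2) ^ (j + 1)))"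
    using sqrt_ln_covering_bound_le[OF assms(1-3)] by (intro sum_mono) (simp add: A_def mult_ac mult_left_mono)
  also have "\<dots> = 3 * sqrt (18 * (D * A)) * (\<Sum>j<n. (real j + 1) * (1 / 2) ^ (j + 1))"
    by (rule sum_distrib_left[symmetric])
  also have "\<dots> \<le> 3 * sqrt (18 * (D * A)) * 2"
    using \<open>1 \<le> D * A\<close> by (intro mult_left_mono sum_Suc_mult_half_power_le) simp
  also have "\<dots> \<le> 30 * sqrt (D * A)"
  proof -
    have "sqrt (18 * (D * A)) = sqrt 18 * sqrt (D * A)" and "sqrt 18 \<le> (5 :: real)"
      by (simp_all add: real_sqrt_mult real_le_lsqrt)
    then show ?thesis
      using \<open>1 \<le> D * A\<close> by simp
  qed
  finally show ?thesis .
qed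

lemma maxout_chaining_sum_le:
  fixes L k m n E :: nat
  assumes "L \<ge> 2" and "k \<ge> 1" and "m \<ge> 1" and E: "E \<le> (L - 1) * k * m * (m + 1) + m"
  defines "D \<equiv> real (L - 1) * real k * real m * (real m + 1)"
    and "A \<equiv> real (L + 1) * ln 2 + 1 / 2 * ln (real L ^ 2 + 1)"
  shows "maxout_chaining_sum L E n \<le> 33 * sqrt (D * A)"
proof -
  have "D = real ((L - 1) * k * m * (m + 1))"
    unfolding D_def by (simp only: of_nat_mult of_nat_add of_nat_1)
  then have "real L \<le> D" and "real E \<le> 2 * D"
    using maxout_size_ge[OF assms(1-3)] E by (simp_all only: of_nat_le_iff)
  then have "1 \<le> D"
    using assms(1) by simp
  moreover have "1 \<le> A"
    using one_le_log_term[OF assms(1)] by (simp add: A_def)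
  ultimately have "1 \<le> D * A"
    by (metis mult_mono' mult_1 zero_le_one)
  have "sqrt L * sqrt (2 * ln 2) \<le> 2 * sqrt (D * A)"
  proof -
    have "real L * (2 * ln 2) \<le> D * 2"
      using \<open>real L \<le> D\<close> ln_2_less_1 by (intro mult_mono) auto
    also have "\<dots> \<le> 4 * (D * A)"
      using \<open>1 \<le> D\<close> \<open>1 \<le> A\<close> by simp
    finally have "sqrt (real L * (2 * ln 2)) \<le> sqrt (4 * (D * A))"
      by (rule real_sqrt_le_mono)
    then show ?thesis
      by (simp add: real_sqrt_mult)
  qed
  moreover have "sqrt n * (1 / 2) ^ n \<le> sqrt (D * A)"
    using sqrt_mult_half_power_le_one[of n] \<open>1 \<le> D * A\<close> by (simp add: order_trans)
  moreover have "(\<Sum>j<n. 3 * (1 / 2) ^ (j + 1) * sqrt (2 * ln (2 * (covering_bound L E (Suc j) * covering_bound L E j))))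
      \<le> 30 * sqrt (D * A)"
    using sum_chaining_levels_le[OF assms(1) \<open>real E \<le> 2 * D\<close> \<open>1 \<le> D\<close>] by (simp add: A_def)
  ultimately show ?thesis
    by (simp add: maxout_chaining_sum_def)
qed

theorem proposition11:
  fixes L k m d n :: nat and M :: "nat \<Rightarrow> nat" and X :: "nat \<Rightarrow> nat \<Rightarrow> real"
  assumes "L \<ge> 2" and "k \<ge> 1" and "m \<ge> 1"
    and "\<forall>l \<in> {1..L}. M l \<ge> 1 \<and> M l \<le> m"
    and "M 1 = d"
    and "\<forall>i < n. (\<Sum>p<d. (X i p)^2) \<le> 1"
  shows "rademacher_emp n X (maxout_class L M k)
     \<le> 64 * sqrt (real (L - 1) * real k * real m * (real m + 1) / real n)
          * (sqrt (real (L + 1) * ln 2 + (1/2) * ln (real L ^ 2 + 1)) + sqrt pi / 2)"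
proof (cases "n = 0")
  case True
  have "maxout_class L M k \<noteq> {}"
    using maxout_zero_mem_params by (auto simp: maxout_class_eq_image)
  with True show ?thesis
    by (simp add: rademacher_emp_empty_sample)
next
  case False
  define D where "D = real (L - 1) * real k * real m * (real m + 1)"
  define A where "A = real (L + 1) * ln 2 + 1 / 2 * ln (real L ^ 2 + 1)"
  have "L2_set (X t) {..<M 1} \<le> 1" if "t < n" for t
    using assms(5,6) that by (simp add: L2_set_le_1_iff)
  with False have "rademacher_emp n X (maxout_class L M k)
      \<le> maxout_chaining_sum L (card (maxout_coords L M k)) n / sqrt n"
    by (intro rademacher_maxout_le assms(1,2)) simp_all
  also have "\<dots> \<le> 33 * sqrt (D * A) / sqrt n"
    using assms(1,4) unfolding D_def A_def
    by (intro divide_right_mono maxout_chaining_sum_le assms(1-3) card_maxout_coords_le) auto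
  also have "\<dots> = 33 * (sqrt (D / n) * sqrt A)"
    by (simp add: real_sqrt_mult real_sqrt_divide)
  also have "\<dots> \<le> 64 * sqrt (D / n) * (sqrt A + sqrt pi / 2)"
  proof -
    have "0 \<le> sqrt (D / n) * sqrt A" and "0 \<le> sqrt (D / n) * sqrt pi"
      by (simp_all add: D_def A_def)
    then show ?thesis
      by (simp add: algebra_simps)
  qed
  finally show ?thesis
    by (simp add: D_def A_def)
qed

end
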